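(* Let $X$ be a connected, finite, simple $3$-valent graph equipped with an orientation at each vertex, let $k\geq1$, let $N=|V(\mathrm{GC}_{k,0}(X))|$ and let $\lambda_1(\mathrm{GC}_{k,0}(X))\leq\cdots\leq\lambda_N(\mathrm{GC}_{k,0}(X))$ be its Laplacian eigenvalues. Let $\nu_1(k)\leq\cdots\leq\nu_{k^2}(k)$ be the eigenvalues of the adjacency matrix, and $0=\lambda_1(k)\leq\lambda_2(k)\leq\cdots\leq\lambda_{k^2}(k)$ the eigenvalues of the Laplacian, of the $3$-valent $(k,0)$-cluster $\triangle(k)$. Then for $j=1,\dots,k^2$, $$\lambda_j(\mathrm{GC}_{k,0}(X))\leq 3-\nu_{k^2-j+1}(k),\qquad \lambda_{N-j+1}(\mathrm{GC}_{k,0}(X))\geq 3-\nu_j(k).$$ Moreover, $$\lambda_i(\mathrm{GC}_{k,0}(X))\leq\lambda_t(k)+\delta_{k^2-t+i}(k)\quad\text{for }1\leq i\leq t\leq k^2,$$ $$\lambda_{N-j+1}(\mathrm{GC}_{k,0}(X))\geq\lambda_{k^2-s+1}(k)+\delta_{1+s-j}(k)\quad\text{for }1\leq j\leq s\leq k^2,$$ where $\delta_j(k)=0$ for $j=1,\dots,k^2-3k+3$, $\delta_j(k)=1$ for $j=k^2-3k+4,\dots,k^2-3$, and $\delta_j(k)=2$ for $j=k^2-2,k^2-1,k^2$.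
   Context: The Laplacian of a graph $Y$ acts on $f\in\mathbb{C}^{V(Y)}$ by $(\Delta_Y f)(p)=\deg_Y(p)f(p)-\sum_{q\sim p}f(q)$; eigenvalues are listed with multiplicity in nondecreasing order. An orientation at each vertex is a cyclic ordering of the three edges at each vertex. The $3$-valent $(k,0)$-cluster $\triangle(k)$: with $\omega=e^{\pi i/3}$, the triangle with vertices $0,k,k\omega$ is subdivided by the triangular lattice $\mathbb{Z}[\omega]$ into $k^2$ unit triangles; $\triangle(k)$ is the graph whose vertices are the barycenters of these $k^2$ unit triangles, two being adjacent when the triangles share an edge (its Laplacian uses its own vertex degrees). Goldberg–Coxeter construction $\mathrm{GC}_{k,0}(X)$: for each $p\in V(X)$ take a copy $\triangle(p)$ of $\triangle(k)$ placed on the triangle $T$ with vertices $0,k,k\omega$, whose three sides are matched with the three edges at $p$ so that the cyclic order at $p$ agrees with the counterclockwise order of the sides. For each edge $e=pq$, place $\triangle(p)$ on $T$ with $e$ corresponding to the side from $k$ to $k\omega$ and $\triangle(q)$ (preserving orientation) on the triangle with vertices $k,(1+\omega)k,\omega k$ with $e$ corresponding to the side from $\omega k$ to $k$, and join (identify) the overlapping lattice edges between the two pieces; the result is the $3$-valent graph $\mathrm{GC}_{k,0}(X)$, containing each $\triangle(p)$ as an induced subgraph. *)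

theory Defs
  imports "Jordan_Normal_Form.Char_Poly" "HOL-Library.Multiset"
begin

text \<open>A graph is given by a vertex set V and an adjacency relation E.
  Matrices are built with respect to an arbitrary enumeration of V; the spectrum
  does not depend on that choice.\<close>

definition vlist :: "'v set \<Rightarrow> 'v list" where
  "vlist V = (SOME xs. distinct xs \<and> set xs = V)"

definition graph_degree :: "'v set \<Rightarrow> ('v \<Rightarrow> 'v \<Rightarrow> bool) \<Rightarrow> 'v \<Rightarrow> nat" where
  "graph_degree V E p = card {q \<in> V. E p q}"

definition adjacency_mat :: "'v set \<Rightarrow> ('v \<Rightarrow> 'v \<Rightarrow> bool) \<Rightarrow> real mat" where
  "adjacency_mat V E = (let vs = vlist V; n = length vs in
     mat n n (\<lambda>(i, j). if E (vs ! i) (vs ! j) then 1 else 0))"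

definition laplacian_mat :: "'v set \<Rightarrow> ('v \<Rightarrow> 'v \<Rightarrow> bool) \<Rightarrow> real mat" where
  "laplacian_mat V E = (let vs = vlist V; n = length vs in
     mat n n (\<lambda>(i, j). (if i = j then real (graph_degree V E (vs ! i)) else 0)
                       - (if E (vs ! i) (vs ! j) then 1 else 0)))"

text \<open>Eigenvalues listed with multiplicity (roots of the characteristic polynomial)
  in nondecreasing order; eig A j is the j-th one (1-based).\<close>
definition eig :: "real mat \<Rightarrow> nat \<Rightarrow> real" where
  "eig A j = sorted_list_of_multiset (proots (char_poly A)) ! (j - 1)"

definition simple_graph :: "'v set \<Rightarrow> ('v \<Rightarrow> 'v \<Rightarrow> bool) \<Rightarrow> bool" where
  "simple_graph V E \<longleftrightarrow> finite V \<and> (\<forall>p q. E p q \<longrightarrow> p \<in> V \<and> q \<in> V)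
     \<and> (\<forall>p q. E p q \<longrightarrow> E q p) \<and> (\<forall>p. \<not> E p p)"

definition connected_graph :: "'v set \<Rightarrow> ('v \<Rightarrow> 'v \<Rightarrow> bool) \<Rightarrow> bool" where
  "connected_graph V E \<longleftrightarrow> V \<noteq> {} \<and> (\<forall>p\<in>V. \<forall>q\<in>V. E\<^sup>*\<^sup>* p q)"

definition three_valent :: "'v set \<Rightarrow> ('v \<Rightarrow> 'v \<Rightarrow> bool) \<Rightarrow> bool" where
  "three_valent V E \<longleftrightarrow> (\<forall>p\<in>V. graph_degree V E p = 3)"

text \<open>An orientation at each vertex of a 3-valent simple graph: the cyclic ordering
  nb p 0 -> nb p 1 -> nb p 2 -> nb p 0 of the three edges (equivalently the three
  neighbours, the graph being simple) at p.\<close>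
definition orientation :: "'v set \<Rightarrow> ('v \<Rightarrow> 'v \<Rightarrow> bool) \<Rightarrow> ('v \<Rightarrow> nat \<Rightarrow> 'v) \<Rightarrow> bool" where
  "orientation V E nb \<longleftrightarrow>
     (\<forall>p\<in>V. bij_betw (nb p) {0, 1, 2} {q \<in> V. E p q})"

text \<open>Unit triangles of the triangle with vertices 0, k, k omega, in coordinates
  a + b omega: Up a b has vertices (a,b),(a+1,b),(a,b+1) (a+b<k);
  Dn a b has vertices (a+1,b),(a,b+1),(a+1,b+1) (a+b+1<k).\<close>
datatype tri = Up nat nat | Dn nat nat

definition tri_verts :: "nat \<Rightarrow> tri set" where
  "tri_verts k = {Up a b | a b. a + b < k} \<union> {Dn a b | a b. a + b + 1 < k}"

fun tri_share :: "tri \<Rightarrow> tri \<Rightarrow> bool" where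
  "tri_share (Up a b) (Dn c d) = ((c = a \<and> d = b) \<or> (c + 1 = a \<and> d = b) \<or> (c = a \<and> d + 1 = b))"
| "tri_share (Dn c d) (Up a b) = ((c = a \<and> d = b) \<or> (c + 1 = a \<and> d = b) \<or> (c = a \<and> d + 1 = b))"
| "tri_share _ _ = False"

definition cluster_adj :: "nat \<Rightarrow> tri \<Rightarrow> tri \<Rightarrow> bool" where
  "cluster_adj k x y \<longleftrightarrow> x \<in> tri_verts k \<and> y \<in> tri_verts k \<and> tri_share x y"

text \<open>Side i of the triangle (i=0: from 0 to k, i=1: from k to k omega,
  i=2: from k omega to 0; counterclockwise order) carries k unit (up) triangles;
  side_tri k i t is the t-th one (t<k) counted along the counterclockwise direction
  of the side.  Placing dart i of p on side i (cyclic order = counterclockwise order),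
  the gluing of the edge pq described in the paper (the copy for q is rotated by pi
  about the midpoint of the common side) identifies the lattice edge of the t-th
  triangle on the side of p with that of the (k-1-t)-th triangle on the side of q.\<close>
definition side_tri :: "nat \<Rightarrow> nat \<Rightarrow> nat \<Rightarrow> tri" where
  "side_tri k i t = (if i = 0 then Up t 0 else if i = 1 then Up (k - 1 - t) t else Up 0 (k - 1 - t))"

definition gc_verts :: "'v set \<Rightarrow> nat \<Rightarrow> ('v \<times> tri) set" where
  "gc_verts V k = V \<times> tri_verts k"

definition gc_adj :: "'v set \<Rightarrow> ('v \<Rightarrow> 'v \<Rightarrow> bool) \<Rightarrow> ('v \<Rightarrow> nat \<Rightarrow> 'v) \<Rightarrow> nat
    \<Rightarrow> 'v \<times> tri \<Rightarrow> 'v \<times> tri \<Rightarrow> bool" where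
  "gc_adj V E nb k u w \<longleftrightarrow> u \<in> gc_verts V k \<and> w \<in> gc_verts V k \<and>
     ((fst u = fst w \<and> cluster_adj k (snd u) (snd w)) \<or>
      (\<exists>i<3. \<exists>j<3. \<exists>t<k. E (fst u) (fst w) \<and> nb (fst u) i = fst w \<and> nb (fst w) j = fst u
          \<and> snd u = side_tri k i t \<and> snd w = side_tri k j (k - 1 - t)))"

definition delta :: "nat \<Rightarrow> nat \<Rightarrow> real" where
  "delta k j = (if int j \<le> int (k^2) - 3 * int k + 3 then 0
                else if int j \<le> int (k^2) - 3 then 1 else 2)"

end

theory Submission
  imports Defs "Jordan_Normal_Form.Schur_Decomposition"
begin

(* Every vertex of GC_{k,0}(X) has degree 3 and each copy of the cluster is an induced subgraph,
   so compressing the Laplacian of GC_{k,0}(X) to one copy gives 3 I - A(k), where A(k) is the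
   adjacency matrix of the cluster; Cauchy interlacing yields the first pair of inequalities.
   For the others write A(k) = D(k) - L(k) with D(k) the diagonal degree matrix of the cluster.
   For k >= 2 the cluster has k^2 - 3k + 3 triangles of degree 3, 3k - 6 of degree 2 and 3 of
   degree 1, so D(k) is bounded by 3 - delta on coordinate subspaces of large dimension, and the
   min-max principle, applied on the intersection of such a subspace with a window of
   eigenvectors of L(k), compares the eigenvalues of A(k) with those of L(k) shifted by delta. *)

section \<open>Spectral theorem for real symmetric matrices\<close>

definition sym_mat :: "real mat \<Rightarrow> nat \<Rightarrow> bool" where
  "sym_mat A n \<longleftrightarrow> A \<in> carrier_mat n n \<and> (\<forall>i<n. \<forall>j<n. A $$ (i,j) = A $$ (j,i))"

definition isometry_mat :: "real mat \<Rightarrow> nat \<Rightarrow> nat \<Rightarrow> bool" where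
  "isometry_mat F n p \<longleftrightarrow> F \<in> carrier_mat n p \<and> transpose_mat F * F = 1\<^sub>m p"

definition orthonormal_eigenbasis :: "real mat \<Rightarrow> nat \<Rightarrow> real vec list \<Rightarrow> (nat \<Rightarrow> real) \<Rightarrow> bool" where
  "orthonormal_eigenbasis A n qs ev \<longleftrightarrow> length qs = n \<and>
     (\<forall>i<n. qs ! i \<in> carrier_vec n \<and> A *\<^sub>v qs ! i = ev i \<cdot>\<^sub>v qs ! i) \<and>
     (\<forall>i<n. \<forall>j<n. qs ! i \<bullet> qs ! j = (if i = j then 1 else 0))"

lemma sym_mat_carrier: "sym_mat A n \<Longrightarrow> A \<in> carrier_mat n n"
  unfolding sym_mat_def by simp

lemma sym_mat_transpose: "sym_mat A n \<Longrightarrow> transpose_mat A = A"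
  unfolding sym_mat_def by (intro eq_matI, auto)

lemma sym_mat_scalar_prod_swap:
  assumes S: "sym_mat A n" and x: "x \<in> carrier_vec n" and y: "y \<in> carrier_vec n"
  shows "x \<bullet> (A *\<^sub>v y) = (A *\<^sub>v x) \<bullet> y"
  using transpose_vec_mult_scalar[OF sym_mat_carrier[OF S] y x] sym_mat_transpose[OF S] by simp

lemma isometry_scalar_prod:
  assumes F: "isometry_mat F n p" and x: "x \<in> carrier_vec p" and y: "y \<in> carrier_vec p"
  shows "(F *\<^sub>v x) \<bullet> (F *\<^sub>v y) = x \<bullet> y"
proof -
  have Fc: "F \<in> carrier_mat n p" and FF: "transpose_mat F * F = 1\<^sub>m p"
    using F unfolding isometry_mat_def by auto
  have "(F *\<^sub>v x) \<bullet> (F *\<^sub>v y) = (transpose_mat F *\<^sub>v (F *\<^sub>v x)) \<bullet> y"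
    using transpose_vec_mult_scalar[OF Fc y, of "F *\<^sub>v x"] Fc x by simp
  also have "transpose_mat F *\<^sub>v (F *\<^sub>v x) = (transpose_mat F * F) *\<^sub>v x"
    using Fc x by (subst assoc_mult_mat_vec, auto)
  finally show ?thesis unfolding FF using x by simp
qed

lemma isometry_mult_vec_eq_0:
  assumes F: "isometry_mat F n p" and x: "x \<in> carrier_vec p" and z: "F *\<^sub>v x = 0\<^sub>v n"
  shows "x = 0\<^sub>v p"
proof -
  have "x \<bullet> x = 0" using isometry_scalar_prod[OF F x x] z by simp
  thus ?thesis using x conjugate_square_eq_0_vec[OF x] by simp
qed

lemma isometry_mat_mult:
  assumes E: "isometry_mat E N m" and Q: "isometry_mat Q m p"
  shows "isometry_mat (E * Q) N p"
proof -
  have Ec: "E \<in> carrier_mat N m" and EE: "transpose_mat E * E = 1\<^sub>m m"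
    and Qc: "Q \<in> carrier_mat m p" and QQ: "transpose_mat Q * Q = 1\<^sub>m p"
    using E Q unfolding isometry_mat_def by auto
  have "transpose_mat (E * Q) * (E * Q) = transpose_mat Q * (transpose_mat E * E) * Q"
    using Ec Qc by (simp add: transpose_mult assoc_mult_mat[of _ p m _ N _ p]
        assoc_mult_mat[of _ m N _ m _ p] assoc_mult_mat[of _ p m _ m _ p])
  thus ?thesis using Ec Qc QQ unfolding EE isometry_mat_def by simp
qed

lemma sym_mat_char_poly_root_real:
  assumes S: "sym_mat A n"
    and z: "poly (char_poly (map_mat complex_of_real A)) z = 0"
  shows "z \<in> \<real>"
proof -
  have A: "A \<in> carrier_mat n n" using S unfolding sym_mat_def by auto
  define C where "C = map_mat complex_of_real A"
  have C: "C \<in> carrier_mat n n" using A unfolding C_def by auto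
  have "eigenvalue C z" using z eigenvalue_root_char_poly[OF C] unfolding C_def by simp
  then obtain w where ev: "eigenvector C w z" unfolding eigenvalue_def by auto
  hence w: "w \<in> carrier_vec n" and w0: "w \<noteq> 0\<^sub>v n" and Cw: "C *\<^sub>v w = z \<cdot>\<^sub>v w"
    using C unfolding eigenvector_def by auto
  define s where "s = (\<Sum>i<n. \<Sum>j<n. cnj (w$i) * C $$ (i,j) * w $ j)"
  define r where "r = (\<Sum>i<n. cnj (w$i) * w$i)"
  have "s = (\<Sum>i<n. cnj (w$i) * (C *\<^sub>v w) $ i)"
    unfolding s_def using C w
    by (auto simp: scalar_prod_def sum_distrib_left mult.assoc atLeast0LessThan intro!: sum.cong)
  also have "\<dots> = z * r" unfolding Cw r_def using w
    by (auto simp: sum_distrib_left intro!: sum.cong)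
  finally have sz: "s = z * r" .
  have "cnj s = (\<Sum>i<n. \<Sum>j<n. w$i * C $$ (i,j) * cnj (w $ j))"
    unfolding s_def using C A by (auto simp: C_def intro!: sum.cong)
  also have "\<dots> = (\<Sum>j<n. \<Sum>i<n. w$i * C $$ (i,j) * cnj (w $ j))"
    by (rule sum.swap)
  also have "\<dots> = s" unfolding s_def using S C
    by (auto simp: C_def sym_mat_def intro!: sum.cong)
  finally have "s \<in> \<real>" by (metis Reals_cnj_iff)
  hence "Im (z * r) = 0" using sz by (simp add: complex_is_Real_iff)
  have rr: "r = complex_of_real (\<Sum>i<n. (cmod (w$i))^2)"
    unfolding r_def of_real_sum by (rule sum.cong, simp, metis complex_norm_square mult.commute)
  obtain i where i: "i < n" "w $ i \<noteq> 0"
    using w w0 by (metis eq_vecI carrier_vecD index_zero_vec)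
  have "(\<Sum>i<n. (cmod (w$i))^2) > 0"
    by (rule sum_pos2[of _ i], insert i, auto)
  hence "Re r > 0" "Im r = 0" unfolding rr by auto
  with \<open>Im (z * r) = 0\<close> have "Im z = 0" by simp
  thus ?thesis by (simp add: complex_is_Real_iff)
qed

lemma proots_prod_linear_factors:
  "proots (\<Prod>e\<leftarrow>es. [:- e, 1:]) = mset (es :: 'a :: idom list)"
proof (induct es)
  case (Cons e es)
  have "(\<Prod>e\<leftarrow>es. [:- e, 1:]) \<noteq> (0 :: 'a poly)"
    by (subst prod_list_zero_iff, auto)
  hence "proots ([:- e, 1:] * (\<Prod>e\<leftarrow>es. [:- e, 1:]))
      = proots [:- e, 1:] + proots (\<Prod>e\<leftarrow>es. [:- e, 1:])"
    by (intro proots_mult, auto)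
  thus ?case using Cons by (simp only: list.map prod_list.Cons proots_linear_factor, simp)
qed simp

lemma sym_mat_char_poly_splits:
  assumes S: "sym_mat A n"
  obtains es where "char_poly A = (\<Prod>e\<leftarrow>es. [:- e, 1:])" and "length es = n"
proof -
  have A: "A \<in> carrier_mat n n" using S unfolding sym_mat_def by auto
  define C where "C = map_mat complex_of_real A"
  have C: "C \<in> carrier_mat n n" using A unfolding C_def by auto
  obtain as where cp: "char_poly C = (\<Prod>a\<leftarrow>as. [:- a, 1:])" and len: "length as = n"
    using char_poly_factorized[OF C] by auto
  have hom: "char_poly C = map_poly of_real (char_poly A)"
    unfolding C_def by (rule of_real_hom.char_poly_hom[OF A])
  have real: "a \<in> \<real>" if "a \<in> set as" for a
  proof -
    have "poly (char_poly C) a = 0" unfolding cp using that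
      by (auto simp: poly_prod_list prod_list_zero_iff)
    thus ?thesis using sym_mat_char_poly_root_real[OF S] unfolding C_def by auto
  qed
  interpret mh: map_poly_inj_comm_ring_hom "of_real :: real \<Rightarrow> complex" ..
  define es where "es = map Re as"
  have "map_poly of_real (\<Prod>e\<leftarrow>es. [:- e, 1:]) = (\<Prod>a\<leftarrow>as. [:- a, 1:])"
    unfolding es_def using real
  proof (induct as)
    case (Cons a as)
    have "of_real (Re a) = a" using Cons(2) by (simp add: complex_is_Real_iff complex_eq_iff)
    thus ?case using Cons by (simp only: list.map prod_list.Cons mh.hom_mult o_apply, simp)
  qed simp
  hence "(\<Prod>e\<leftarrow>es. [:- e, 1:]) = char_poly A"
    using cp hom by (intro mh.injectivity) simp
  moreover have "length es = n" using len unfolding es_def by auto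
  ultimately show ?thesis using that by metis
qed

lemma orthogonal_basis_completion:
  assumes v: "v \<in> carrier_vec n" and v0: "v \<noteq> 0\<^sub>v (n::nat)"
  obtains ws where "length ws = n" and "\<And>i. i < n \<Longrightarrow> ws ! i \<in> carrier_vec n" and "ws ! 0 = v"
    and "\<And>i j. i < n \<Longrightarrow> j < n \<Longrightarrow> i \<noteq> j \<Longrightarrow> ws ! i \<bullet> ws ! j = (0::real)"
    and "\<And>i. i < n \<Longrightarrow> 0 < ws ! i \<bullet> ws ! i"
proof -
  interpret cof_vec_space n "TYPE(real)" .
  define b where "b = basis_completion v"
  note bc = basis_completion[OF v v0, folded b_def]
  define ws where "ws = gram_schmidt n b"
  note gs = gram_schmidt_result[OF bc(2) bc(4) bc(5) ws_def]
  have len: "length ws = n" using gs(4) bc(6) by simp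
  have n: "0 < n" using v0 v by (cases n, auto)
  from bc(6,7) n obtain vs where bv: "b = v # vs" by (cases b, auto)
  have "hd ws = v" unfolding ws_def bv by (rule gram_schmidt_hd[OF v])
  hence "ws ! 0 = v" using len n by (metis hd_conv_nth length_greater_0_conv)
  moreover have "ws ! i \<in> carrier_vec n" if "i < n" for i using gs(3) len that by auto
  moreover have "ws ! i \<bullet> ws ! j = 0" if "i < n" "j < n" "i \<noteq> j" for i j
    using gs(2) len that unfolding corthogonal_def by auto
  moreover have "ws ! i \<bullet> ws ! i > 0" if "i < n" for i
  proof -
    have "ws ! i \<bullet>c ws ! i \<noteq> 0" using gs(2) len that unfolding corthogonal_def by auto
    moreover have "ws ! i \<bullet>c ws ! i \<ge> 0" using conjugate_square_ge_0_vec[of "ws ! i"] by simp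
    ultimately show ?thesis by simp
  qed
  ultimately show ?thesis using that len by blast
qed

lemma unit_vec_orthonormal_completion:
  assumes v: "v \<in> carrier_vec n" and vv: "v \<bullet> v = (1::real)"
  obtains W where "isometry_mat W n n" and "col W 0 = v"
proof -
  have v0: "v \<noteq> 0\<^sub>v n" using vv v by auto
  have n: "0 < n" using v0 v by (cases n, auto)
  obtain ws0 where len0: "length ws0 = n" and ws0i: "\<And>i. i < n \<Longrightarrow> ws0 ! i \<in> carrier_vec n"
    and hd0: "ws0 ! 0 = v" and orth0: "\<And>i j. i < n \<Longrightarrow> j < n \<Longrightarrow> i \<noteq> j \<Longrightarrow> ws0 ! i \<bullet> ws0 ! j = 0"
    and pos: "\<And>i. i < n \<Longrightarrow> 0 < ws0 ! i \<bullet> ws0 ! i"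
    using orthogonal_basis_completion[OF v v0] by blast
  define ws where "ws = map (\<lambda>w. (1 / sqrt (w \<bullet> w)) \<cdot>\<^sub>v w) ws0"
  have len: "length ws = n" unfolding ws_def using len0 by simp
  have wsi: "ws ! i \<in> carrier_vec n" if "i < n" for i using ws0i[OF that] len0 that
    unfolding ws_def by simp
  have orth: "ws ! i \<bullet> ws ! j = (if i = j then 1 else 0)" if i: "i < n" and j: "j < n" for i j
  proof -
    have "ws ! i \<bullet> ws ! j = (1 / sqrt (ws0!i \<bullet> ws0!i)) * (1 / sqrt (ws0!j \<bullet> ws0!j)) * (ws0 ! i \<bullet> ws0 ! j)"
      unfolding ws_def using i j len0 ws0i[OF i] ws0i[OF j] by simp
    thus ?thesis using pos[OF i] orth0[OF i j] by (cases "i = j") (simp_all add: real_sqrt_mult[symmetric])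
  qed
  define W where "W = mat_of_cols n ws"
  have colW: "col W i = ws ! i" if "i < n" for i unfolding W_def using len wsi that by simp
  have "isometry_mat W n n"
    unfolding isometry_mat_def W_def using len colW orth wsi
    by (intro conjI eq_matI) (auto simp: W_def)
  moreover have "col W 0 = v" using colW[OF n] hd0 vv n unfolding ws_def using len0 by simp
  ultimately show ?thesis using that by blast
qed

abbreviation block_diag1 :: "real \<Rightarrow> real mat \<Rightarrow> nat \<Rightarrow> real mat" where
  "block_diag1 e B n \<equiv> four_block_mat (mat 1 1 (\<lambda>_. e)) (0\<^sub>m 1 n) (0\<^sub>m n 1) B"

lemma sym_mat_deflation:
  assumes S: "sym_mat A (Suc n)" and v: "v \<in> carrier_vec (Suc n)" "v \<bullet> v = 1"
    and Av: "A *\<^sub>v v = e \<cdot>\<^sub>v v"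
  obtains W B where "isometry_mat W (Suc n) (Suc n)" and "sym_mat B n"
    and "transpose_mat W * (A * W) = block_diag1 e B n"
proof -
  have A: "A \<in> carrier_mat (Suc n) (Suc n)" using S by (rule sym_mat_carrier)
  obtain W where W: "isometry_mat W (Suc n) (Suc n)" and W0: "col W 0 = v"
    using unit_vec_orthonormal_completion[OF v] by blast
  have Wc: "W \<in> carrier_mat (Suc n) (Suc n)" using W unfolding isometry_mat_def by simp
  have colc: "col W i \<in> carrier_vec (Suc n)" for i using Wc by (auto intro: carrier_vecI)
  have orth: "col W i \<bullet> col W j = (if i = j then 1 else 0)" if "i < Suc n" "j < Suc n" for i j
    using arg_cong[OF W[unfolded isometry_mat_def, THEN conjunct2], of "\<lambda>M. M $$ (i, j)"] that Wc
    by simp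
  define A' where "A' = transpose_mat W * (A * W)"
  have A'c: "A' \<in> carrier_mat (Suc n) (Suc n)" unfolding A'_def using Wc A by auto
  have A'e: "A' $$ (i,j) = col W i \<bullet> (A *\<^sub>v col W j)" if "i < Suc n" "j < Suc n" for i j
    unfolding A'_def using that Wc A by (auto simp: mult_mat_vec_def)
  have A'sym: "A' $$ (i,j) = A' $$ (j,i)" if "i < Suc n" "j < Suc n" for i j
  proof -
    have "col W i \<bullet> (A *\<^sub>v col W j) = (A *\<^sub>v col W i) \<bullet> col W j"
      by (rule sym_mat_scalar_prod_swap[OF S colc colc])
    also have "\<dots> = col W j \<bullet> (A *\<^sub>v col W i)"
      by (rule comm_scalar_prod[OF _ colc], insert A colc, auto)
    finally show ?thesis using A'e that by simp
  qed
  have A'0: "A' $$ (i,0) = (if i = 0 then e else 0)" if "i < Suc n" for i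
    using A'e[OF that] W0 Av orth[OF that] colc v by (auto simp: scalar_prod_smult_distrib)
  define B where "B = mat n n (\<lambda>(i,j). A' $$ (Suc i, Suc j))"
  have "sym_mat B n" unfolding sym_mat_def B_def using A'sym by auto
  moreover have "A' = block_diag1 e B n"
    by (rule eq_matI, insert A'c A'0 A'sym, auto simp: B_def)
  ultimately show ?thesis using that W unfolding A'_def by blast
qed

lemma block_diag1_eigenvectors:
  assumes B: "B \<in> carrier_mat n n"
  shows "block_diag1 e B n *\<^sub>v (unit_vec 1 0 @\<^sub>v 0\<^sub>v n) = e \<cdot>\<^sub>v (unit_vec 1 0 @\<^sub>v 0\<^sub>v n)"
    and "q \<in> carrier_vec n \<Longrightarrow> B *\<^sub>v q = \<mu> \<cdot>\<^sub>v q \<Longrightarrow>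
      block_diag1 e B n *\<^sub>v (0\<^sub>v 1 @\<^sub>v q) = \<mu> \<cdot>\<^sub>v (0\<^sub>v 1 @\<^sub>v q)"
proof -
  have e1: "mat 1 1 (\<lambda>_. e) \<in> carrier_mat 1 1" by simp
  have mult: "block_diag1 e B n *\<^sub>v (a @\<^sub>v d) = (mat 1 1 (\<lambda>_. e) *\<^sub>v a) @\<^sub>v (B *\<^sub>v d)"
    if a: "a \<in> carrier_vec 1" and d: "d \<in> carrier_vec n" for a d
  proof -
    have "(0\<^sub>m 1 n *\<^sub>v d :: real vec) = 0\<^sub>v 1" "(0\<^sub>m n 1 *\<^sub>v a :: real vec) = 0\<^sub>v n"
      using a d by (auto intro!: eq_vecI)
    moreover have "mat 1 1 (\<lambda>_. e) *\<^sub>v a \<in> carrier_vec 1" by (intro carrier_vecI) simp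
    moreover have "B *\<^sub>v d \<in> carrier_vec n" using B d by simp
    ultimately show ?thesis
      using four_block_mat_mult_vec[OF e1 zero_carrier_mat zero_carrier_mat B a d] by simp
  qed
  have smult: "c \<cdot>\<^sub>v (a @\<^sub>v d) = (c \<cdot>\<^sub>v a) @\<^sub>v (c \<cdot>\<^sub>v d)" for c :: real and a d
    by (intro eq_vecI) auto
  have "mat 1 1 (\<lambda>_. e) *\<^sub>v unit_vec 1 0 = e \<cdot>\<^sub>v unit_vec 1 0"
    by (intro eq_vecI) (auto simp: scalar_prod_def)
  moreover have "B *\<^sub>v 0\<^sub>v n = e \<cdot>\<^sub>v 0\<^sub>v n" using B by (intro eq_vecI) auto
  ultimately show "block_diag1 e B n *\<^sub>v (unit_vec 1 0 @\<^sub>v 0\<^sub>v n) = e \<cdot>\<^sub>v (unit_vec 1 0 @\<^sub>v 0\<^sub>v n)"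
    using mult[of "unit_vec 1 0" "0\<^sub>v n"] by (simp add: smult)
  assume q: "q \<in> carrier_vec n" and Bq: "B *\<^sub>v q = \<mu> \<cdot>\<^sub>v q"
  have "mat 1 1 (\<lambda>_. e) *\<^sub>v 0\<^sub>v 1 = \<mu> \<cdot>\<^sub>v 0\<^sub>v 1" by (intro eq_vecI) auto
  thus "block_diag1 e B n *\<^sub>v (0\<^sub>v 1 @\<^sub>v q) = \<mu> \<cdot>\<^sub>v (0\<^sub>v 1 @\<^sub>v q)"
    using mult[OF _ q, of "0\<^sub>v 1"] Bq by (simp add: smult)
qed

lemma orthonormal_eigenbasis_block_diag1:
  assumes B: "B \<in> carrier_mat n n" and qs: "orthonormal_eigenbasis B n qs ev"
  shows "orthonormal_eigenbasis (block_diag1 e B n) (Suc n)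
     ((unit_vec 1 0 @\<^sub>v 0\<^sub>v n) # map (\<lambda>q. 0\<^sub>v 1 @\<^sub>v q) qs) (case_nat e ev)"
proof -
  let ?ys = "(unit_vec 1 0 @\<^sub>v 0\<^sub>v n) # map (\<lambda>q. 0\<^sub>v 1 @\<^sub>v q) qs"
  have len: "length qs = n" and qc: "\<And>i. i < n \<Longrightarrow> qs ! i \<in> carrier_vec n"
    and qe: "\<And>i. i < n \<Longrightarrow> B *\<^sub>v qs ! i = ev i \<cdot>\<^sub>v qs ! i"
    and qo: "\<And>i j. i < n \<Longrightarrow> j < n \<Longrightarrow> qs ! i \<bullet> qs ! j = (if i = j then 1 else 0)"
    using qs unfolding orthonormal_eigenbasis_def by auto
  have u: "unit_vec 1 0 \<in> carrier_vec 1" "0\<^sub>v 1 \<in> carrier_vec 1" "0\<^sub>v n \<in> carrier_vec n"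
    by auto
  have y0: "?ys ! 0 \<in> carrier_vec (1 + n)" using append_carrier_vec[OF u(1) u(3)] by simp
  have ys: "?ys ! Suc i \<in> carrier_vec (1 + n)" if "i < n" for i
    using append_carrier_vec[OF u(2) qc[OF that]] len that by simp
  show ?thesis unfolding orthonormal_eigenbasis_def
  proof (intro conjI allI impI)
    show "length ?ys = Suc n" using len by simp
  next
    fix i assume i: "i < Suc n"
    show "?ys ! i \<in> carrier_vec (Suc n)" using i y0 ys by (cases i) auto
    show "block_diag1 e B n *\<^sub>v ?ys ! i = case_nat e ev i \<cdot>\<^sub>v ?ys ! i"
      using i block_diag1_eigenvectors[OF B] qc qe len by (cases i) auto
    fix j assume j: "j < Suc n"
    show "?ys ! i \<bullet> ?ys ! j = (if i = j then 1 else 0)"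
    proof (cases i; cases j)
      fix i' j' assume ij: "i = Suc i'" "j = Suc j'"
      hence "i' < n" "j' < n" using i j by auto
      thus ?thesis using ij qo[of i' j'] len scalar_prod_append[OF u(2) qc u(2) qc] by simp
    next
      fix j' assume ij: "i = 0" "j = Suc j'"
      hence "j' < n" using j by auto
      thus ?thesis using ij len scalar_prod_append[OF u(1) u(3) u(2) qc] qc by simp
    next
      fix i' assume ij: "i = Suc i'" "j = 0"
      hence "i' < n" using i by auto
      thus ?thesis using ij len scalar_prod_append[OF u(2) qc u(1) u(3)] qc by simp
    next
      assume ij: "i = 0" "j = 0"
      have "(unit_vec 1 0 @\<^sub>v 0\<^sub>v n) \<bullet> (unit_vec 1 0 @\<^sub>v 0\<^sub>v n)
          = unit_vec 1 0 \<bullet> unit_vec 1 0 + 0\<^sub>v n \<bullet> (0\<^sub>v n :: real vec)"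
        by (rule scalar_prod_append[OF u(1) u(3) u(1) u(3)])
      also have "\<dots> = 1" by (simp add: scalar_prod_def)
      finally show ?thesis using ij by simp
    qed
  qed
qed

lemma orthonormal_eigenbasis_conj:
  assumes W: "isometry_mat W n n" and A: "A \<in> carrier_mat n n"
    and qs: "orthonormal_eigenbasis (transpose_mat W * (A * W)) n qs ev"
  shows "orthonormal_eigenbasis A n (map (\<lambda>q. W *\<^sub>v q) qs) ev"
proof -
  have Wc: "W \<in> carrier_mat n n" and WW: "transpose_mat W * W = 1\<^sub>m n"
    using W unfolding isometry_mat_def by auto
  have WW': "W * transpose_mat W = 1\<^sub>m n"
    by (rule mat_mult_left_right_inverse[OF _ Wc WW], insert Wc, auto)
  have conj: "W * (transpose_mat W * (A * W)) = A * W"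
    using Wc A WW' by (simp add: assoc_mult_mat[symmetric, of W n n "transpose_mat W" n "A * W" n])
  have len: "length qs = n" and qc: "\<And>i. i < n \<Longrightarrow> qs ! i \<in> carrier_vec n"
    and qe: "\<And>i. i < n \<Longrightarrow> transpose_mat W * (A * W) *\<^sub>v qs ! i = ev i \<cdot>\<^sub>v qs ! i"
    and qo: "\<And>i j. i < n \<Longrightarrow> j < n \<Longrightarrow> qs ! i \<bullet> qs ! j = (if i = j then 1 else 0)"
    using qs unfolding orthonormal_eigenbasis_def by auto
  have "A *\<^sub>v (W *\<^sub>v qs ! i) = ev i \<cdot>\<^sub>v (W *\<^sub>v qs ! i)" if i: "i < n" for i
  proof -
    have "A *\<^sub>v (W *\<^sub>v qs ! i) = (W * (transpose_mat W * (A * W))) *\<^sub>v qs ! i"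
      unfolding conj using Wc A qc[OF i] by simp
    also have "\<dots> = W *\<^sub>v (transpose_mat W * (A * W) *\<^sub>v qs ! i)"
      by (rule assoc_mult_mat_vec, insert Wc A qc[OF i], auto)
    also have "\<dots> = W *\<^sub>v (ev i \<cdot>\<^sub>v qs ! i)" using qe[OF i] by simp
    finally show ?thesis using Wc qc[OF i] by (simp add: mult_mat_vec)
  qed
  note eq = this
  show ?thesis unfolding orthonormal_eigenbasis_def
  proof (intro conjI allI impI)
    show "length (map (\<lambda>q. W *\<^sub>v q) qs) = n" using len by simp
    fix i assume i: "i < n"
    show "map (\<lambda>q. W *\<^sub>v q) qs ! i \<in> carrier_vec n" using i len Wc qc[OF i] by simp
    show "A *\<^sub>v map (\<lambda>q. W *\<^sub>v q) qs ! i = ev i \<cdot>\<^sub>v map (\<lambda>q. W *\<^sub>v q) qs ! i"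
      using eq[OF i] i len by simp
    fix j assume j: "j < n"
    show "map (\<lambda>q. W *\<^sub>v q) qs ! i \<bullet> map (\<lambda>q. W *\<^sub>v q) qs ! j = (if i = j then 1 else 0)"
      using isometry_scalar_prod[OF W qc[OF i] qc[OF j]] qo[OF i j] i j len by simp
  qed
qed

lemma unit_eigenvector:
  fixes A :: "real mat"
  assumes A: "A \<in> carrier_mat n n" and ev: "eigenvalue A e"
  obtains v where "v \<in> carrier_vec n" "v \<bullet> v = 1" "A *\<^sub>v v = e \<cdot>\<^sub>v v"
proof -
  obtain v0 where "eigenvector A v0 e" using find_eigenvector[OF A ev] by blast
  hence v0: "v0 \<in> carrier_vec n" "v0 \<noteq> 0\<^sub>v n" and Av0: "A *\<^sub>v v0 = e \<cdot>\<^sub>v v0"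
    using A unfolding eigenvector_def by auto
  have pos: "v0 \<bullet> v0 > 0" using conjugate_square_greater_0_vec[OF v0(1)] v0(2) by simp
  define v where "v = (1 / sqrt (v0 \<bullet> v0)) \<cdot>\<^sub>v v0"
  have "v \<in> carrier_vec n" "v \<bullet> v = 1" unfolding v_def using v0 pos
    by (auto simp: real_sqrt_mult[symmetric])
  moreover have "A *\<^sub>v v = e \<cdot>\<^sub>v v" unfolding v_def using mult_mat_vec[OF A v0(1)] Av0 v0
    by (simp add: smult_smult_assoc mult.commute)
  ultimately show ?thesis using that by blast
qed

theorem sym_mat_orthonormal_eigenbasis:
  assumes "sym_mat A n" and "char_poly A = (\<Prod>e\<leftarrow>es. [:- e, 1:])"
  shows "\<exists>qs. orthonormal_eigenbasis A n qs ((!) es)"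
  using assms
proof (induct es arbitrary: n A)
  case Nil
  have "n = 0" using degree_monic_char_poly[OF sym_mat_carrier[OF Nil(1)]] Nil(2) by simp
  thus ?case unfolding orthonormal_eigenbasis_def by auto
next
  case (Cons e es n A)
  have A: "A \<in> carrier_mat n n" using Cons(2) by (rule sym_mat_carrier)
  have cp: "char_poly A = [:-e,1:] * (\<Prod>e\<leftarrow>es. [:- e, 1:])" using Cons(3) by simp
  have "eigenvalue A e" unfolding eigenvalue_root_char_poly[OF A] cp by simp
  then obtain v where v: "v \<in> carrier_vec n" "v \<bullet> v = 1" and Av: "A *\<^sub>v v = e \<cdot>\<^sub>v v"
    using unit_eigenvector[OF A] by blast
  then obtain n' where n: "n = Suc n'" by (cases n) (auto simp: scalar_prod_def)
  obtain W B where W: "isometry_mat W n n" and B: "sym_mat B n'"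
    and blk: "transpose_mat W * (A * W) = block_diag1 e B n'"
    using sym_mat_deflation[OF Cons(2)[unfolded n] v[unfolded n] Av] unfolding n by blast
  have Wc: "W \<in> carrier_mat n n" and WW: "transpose_mat W * W = 1\<^sub>m n"
    using W unfolding isometry_mat_def by auto
  have WW': "W * transpose_mat W = 1\<^sub>m n"
    by (rule mat_mult_left_right_inverse[OF _ Wc WW], insert Wc, auto)
  have "similar_mat (block_diag1 e B n') A" unfolding blk[symmetric] similar_mat_def similar_mat_wit_def
    by (rule exI[of _ "transpose_mat W"], rule exI[of _ W], insert Wc A WW WW',
       auto simp: Let_def assoc_mult_mat[of _ n n _ n _ n])
  hence "char_poly A = char_poly (block_diag1 e B n')" using char_poly_similar by metis
  also have "\<dots> = char_poly (mat 1 1 (\<lambda>_. e)) * char_poly B"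
    by (rule char_poly_four_block_zeros_col, insert sym_mat_carrier[OF B], auto)
  also have "char_poly (mat 1 1 (\<lambda>_. e)) = [:-e, 1:]"
    by (simp add: char_poly_defs det_def sign_def)
  finally have "char_poly B = (\<Prod>e\<leftarrow>es. [:- e, 1:])" unfolding cp
    by (metis mult_cancel_left pCons_eq_0_iff zero_neq_one)
  have evs: "case_nat e ((!) es) = (!) (e # es)" by (simp add: fun_eq_iff nth_Cons)
  obtain qs where "orthonormal_eigenbasis B n' qs ((!) es)" using Cons(1)[OF B] \<open>char_poly B = _\<close> by blast
  from orthonormal_eigenbasis_block_diag1[OF sym_mat_carrier[OF B] this, of e]
  have "orthonormal_eigenbasis (transpose_mat W * (A * W)) n
      ((unit_vec 1 0 @\<^sub>v 0\<^sub>v n') # map (\<lambda>q. 0\<^sub>v 1 @\<^sub>v q) qs) ((!) (e # es))"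
    unfolding blk n evs .
  thus ?case using orthonormal_eigenbasis_conj[OF W A] by blast
qed

lemma sym_mat_sorted_eigenvalues:
  assumes "sym_mat A n"
  obtains ss where "char_poly A = (\<Prod>e\<leftarrow>ss. [:- e, 1:])" and "sorted ss" and "length ss = n"
    and "\<And>i. eig A (Suc i) = ss ! i"
proof -
  obtain es where cp: "char_poly A = (\<Prod>e\<leftarrow>es. [:- e, 1:])" and len: "length es = n"
    using sym_mat_char_poly_splits[OF assms] by blast
  have cp_sort: "char_poly A = (\<Prod>e\<leftarrow>sort es. [:- e, 1:])"
    unfolding cp by (simp only: prod_mset_prod_list[symmetric] mset_map mset_sort)
  have eig_sort: "eig A (Suc i) = sort es ! i" for i
    unfolding eig_def cp proots_prod_linear_factors by simp
  show ?thesis by (rule that[OF cp_sort _ _ eig_sort]) (simp_all add: len)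
qed

corollary sym_mat_sorted_eigenbasis:
  assumes S: "sym_mat A n"
  obtains qs where "orthonormal_eigenbasis A n qs (\<lambda>i. eig A (Suc i))"
proof -
  obtain ss where cp: "char_poly A = (\<Prod>e\<leftarrow>ss. [:- e, 1:])" and "sorted ss" and "length ss = n"
    and eig: "\<And>i. eig A (Suc i) = ss ! i"
    using sym_mat_sorted_eigenvalues[OF S] by blast
  have "(\<lambda>i. eig A (Suc i)) = (!) ss" by (simp add: eig fun_eq_iff)
  thus ?thesis using sym_mat_orthonormal_eigenbasis[OF S cp] that by auto
qed

lemma eig_mono:
  assumes S: "sym_mat A n" and "1 \<le> i" and "i \<le> j" and "j \<le> n"
  shows "eig A i \<le> eig A j"
proof -
  obtain ss where "char_poly A = (\<Prod>e\<leftarrow>ss. [:- e, 1:])" and "sorted ss" and "length ss = n"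
    and eig: "\<And>i. eig A (Suc i) = ss ! i"
    using sym_mat_sorted_eigenvalues[OF S] by blast
  hence "ss ! (i - 1) \<le> ss ! (j - 1)" using assms by (intro sorted_nth_mono) auto
  thus ?thesis using eig[of "i - 1"] eig[of "j - 1"] assms(2,3) by simp
qed

lemma eigenvalue_between_eigs:
  assumes S: "sym_mat A n" and ev: "eigenvalue A \<mu>"
  shows "eig A 1 \<le> \<mu>" and "\<mu> \<le> eig A n"
proof -
  obtain ss where cp: "char_poly A = (\<Prod>e\<leftarrow>ss. [:- e, 1:])" and sorted: "sorted ss"
    and len: "length ss = n" and eig: "\<And>i. eig A (Suc i) = ss ! i"
    using sym_mat_sorted_eigenvalues[OF S] by blast
  have "char_poly A \<noteq> 0" unfolding cp by (subst prod_list_zero_iff) auto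
  moreover have "poly (char_poly A) \<mu> = 0"
    using ev eigenvalue_root_char_poly[OF sym_mat_carrier[OF S]] by simp
  ultimately have "\<mu> \<in># proots (char_poly A)" by simp
  hence "\<mu> \<in> set ss" unfolding cp proots_prod_linear_factors by simp
  then obtain l where l: "l < n" "ss ! l = \<mu>" using len by (auto simp: in_set_conv_nth)
  have "ss ! 0 \<le> ss ! l" "ss ! l \<le> ss ! (n - 1)"
    using l sorted len by (auto intro: sorted_nth_mono)
  thus "eig A 1 \<le> \<mu>" and "\<mu> \<le> eig A n" using eig[of 0] eig[of "n - 1"] l by auto
qed

section \<open>Min-max bounds and interlacing\<close>

definition select_cols :: "real vec list \<Rightarrow> nat \<Rightarrow> nat \<Rightarrow> (nat \<Rightarrow> nat) \<Rightarrow> real mat" where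
  "select_cols qs n p \<sigma> = mat n p (\<lambda>(i,l). qs ! (\<sigma> l) $ i)"

lemma select_cols_isometry:
  assumes qs: "\<forall>i<n. qs ! i \<in> carrier_vec n"
    and orth: "\<forall>i<n. \<forall>j<n. qs ! i \<bullet> qs ! j = (if i = j then 1 else 0)"
    and \<sigma>: "\<forall>l<p. \<sigma> l < n" and inj: "inj_on \<sigma> {..<p}"
  shows "isometry_mat (select_cols qs n p \<sigma>) n p"
    and "l < p \<Longrightarrow> col (select_cols qs n p \<sigma>) l = qs ! (\<sigma> l)"
proof -
  let ?Q = "select_cols qs n p \<sigma>"
  have Q: "?Q \<in> carrier_mat n p" unfolding select_cols_def by auto
  show col: "col ?Q l = qs ! (\<sigma> l)" if "l < p" for l
    using that \<sigma> qs unfolding select_cols_def by (intro eq_vecI, auto)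
  have "transpose_mat ?Q * ?Q = 1\<^sub>m p"
  proof (rule eq_matI)
    fix i j assume "i < dim_row (1\<^sub>m p)" "j < dim_col (1\<^sub>m p)"
    hence ij: "i < p" "j < p" by auto
    have "(transpose_mat ?Q * ?Q) $$ (i,j) = qs ! (\<sigma> i) \<bullet> qs ! (\<sigma> j)"
      using ij Q col by simp
    also have "\<dots> = (if i = j then 1 else 0)" using orth \<sigma> ij inj_onD[OF inj, of i j] by auto
    finally show "(transpose_mat ?Q * ?Q) $$ (i,j) = 1\<^sub>m p $$ (i,j)" using ij by simp
  qed (insert Q, auto)
  thus "isometry_mat ?Q n p" using Q unfolding isometry_mat_def by simp
qed

lemma rayleigh_select_cols:
  assumes A: "A \<in> carrier_mat n n" and qs: "orthonormal_eigenbasis A n qs ev"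
    and \<sigma>: "\<forall>l<p. \<sigma> l < n" and inj: "inj_on \<sigma> {..<p}" and a: "a \<in> carrier_vec p"
  defines "x \<equiv> select_cols qs n p \<sigma> *\<^sub>v a"
  shows "x \<bullet> (A *\<^sub>v x) = (\<Sum>l<p. (a $ l)^2 * ev (\<sigma> l))" and "x \<bullet> x = (\<Sum>l<p. (a $ l)^2)"
proof -
  let ?Q = "select_cols qs n p \<sigma>"
  have qc: "\<forall>i<n. qs ! i \<in> carrier_vec n" and qe: "\<forall>i<n. A *\<^sub>v qs ! i = ev i \<cdot>\<^sub>v qs ! i"
    and qo: "\<forall>i<n. \<forall>j<n. qs ! i \<bullet> qs ! j = (if i = j then 1 else 0)"
    using qs unfolding orthonormal_eigenbasis_def by auto
  note Q = select_cols_isometry[OF qc qo \<sigma> inj]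
  have Qc: "?Q \<in> carrier_mat n p" using Q(1) unfolding isometry_mat_def by simp
  define d where "d = vec p (\<lambda>l. ev (\<sigma> l) * a $ l)"
  have d: "d \<in> carrier_vec p" unfolding d_def by auto
  have "A *\<^sub>v x = ?Q *\<^sub>v d"
  proof (rule eq_vecI)
    fix i assume "i < dim_vec (?Q *\<^sub>v d)"
    hence i: "i < n" using Qc by auto
    have "(A *\<^sub>v x) $ i = (\<Sum>l<p. (A *\<^sub>v col ?Q l) $ i * a $ l)"
      unfolding x_def using i A Qc a
      by (auto simp: scalar_prod_def atLeast0LessThan sum_distrib_left sum_distrib_right
          mult.assoc mult.left_commute intro!: sum.swap[THEN trans] sum.cong)
    also have "\<dots> = (\<Sum>l<p. ev (\<sigma> l) * qs ! (\<sigma> l) $ i * a $ l)"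
      using Q(2) qe qc \<sigma> i by (intro sum.cong) auto
    also have "\<dots> = (?Q *\<^sub>v d) $ i"
      using i Qc d by (auto simp: scalar_prod_def atLeast0LessThan d_def select_cols_def intro!: sum.cong)
    finally show "(A *\<^sub>v x) $ i = (?Q *\<^sub>v d) $ i" .
  qed (insert A Qc, auto simp: x_def)
  hence "x \<bullet> (A *\<^sub>v x) = a \<bullet> d" unfolding x_def using isometry_scalar_prod[OF Q(1) a d] by simp
  also have "\<dots> = (\<Sum>l<p. (a $ l)^2 * ev (\<sigma> l))"
    using a d by (auto simp: scalar_prod_def atLeast0LessThan d_def power2_eq_square intro!: sum.cong)
  finally show "x \<bullet> (A *\<^sub>v x) = (\<Sum>l<p. (a $ l)^2 * ev (\<sigma> l))" .
  show "x \<bullet> x = (\<Sum>l<p. (a $ l)^2)"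
    unfolding x_def using isometry_scalar_prod[OF Q(1) a a] a
    by (auto simp: scalar_prod_def atLeast0LessThan power2_eq_square)
qed

lemma eigen_window_isometry:
  assumes S: "sym_mat A n" and w: "s + w \<le> n"
  obtains Q where "isometry_mat Q n w"
    and "\<And>a. a \<in> carrier_vec w \<Longrightarrow>
      eig A (Suc s) * ((Q *\<^sub>v a) \<bullet> (Q *\<^sub>v a)) \<le> (Q *\<^sub>v a) \<bullet> (A *\<^sub>v (Q *\<^sub>v a))"
    and "\<And>a. a \<in> carrier_vec w \<Longrightarrow>
      (Q *\<^sub>v a) \<bullet> (A *\<^sub>v (Q *\<^sub>v a)) \<le> eig A (s + w) * ((Q *\<^sub>v a) \<bullet> (Q *\<^sub>v a))"
proof -
  obtain qs where qs: "orthonormal_eigenbasis A n qs (\<lambda>i. eig A (Suc i))"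
    using sym_mat_sorted_eigenbasis[OF S] by blast
  have qc: "\<forall>i<n. qs ! i \<in> carrier_vec n"
    and qo: "\<forall>i<n. \<forall>j<n. qs ! i \<bullet> qs ! j = (if i = j then 1 else 0)"
    using qs unfolding orthonormal_eigenbasis_def by auto
  define \<sigma> where "\<sigma> = (\<lambda>l. l + s)"
  have \<sigma>: "\<forall>l<w. \<sigma> l < n" and inj: "inj_on \<sigma> {..<w}"
    unfolding \<sigma>_def using w by (auto intro: inj_onI)
  define Q where "Q = select_cols qs n w \<sigma>"
  note R = rayleigh_select_cols[OF sym_mat_carrier[OF S] qs \<sigma> inj, folded Q_def]
  have mono: "eig A (Suc s) \<le> eig A (Suc (\<sigma> l))" "eig A (Suc (\<sigma> l)) \<le> eig A (s + w)"
    if "l < w" for l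
    using that w unfolding \<sigma>_def by (auto intro: eig_mono[OF S])
  show ?thesis
  proof (rule that)
    show "isometry_mat Q n w" unfolding Q_def by (rule select_cols_isometry(1)[OF qc qo \<sigma> inj])
  next
    fix a :: "real vec" assume a: "a \<in> carrier_vec w"
    have "eig A (Suc s) * (a $ l)^2 \<le> (a $ l)^2 * eig A (Suc (\<sigma> l))"
      and "(a $ l)^2 * eig A (Suc (\<sigma> l)) \<le> eig A (s + w) * (a $ l)^2" if "l < w" for l
      using mult_right_mono[OF mono(1)[OF that] zero_le_power2[of "a $ l"]]
        mult_right_mono[OF mono(2)[OF that] zero_le_power2[of "a $ l"]]
      by (simp_all add: mult.commute)
    thus "eig A (Suc s) * ((Q *\<^sub>v a) \<bullet> (Q *\<^sub>v a)) \<le> (Q *\<^sub>v a) \<bullet> (A *\<^sub>v (Q *\<^sub>v a))"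
      and "(Q *\<^sub>v a) \<bullet> (A *\<^sub>v (Q *\<^sub>v a)) \<le> eig A (s + w) * ((Q *\<^sub>v a) \<bullet> (Q *\<^sub>v a))"
      unfolding R[OF a] sum_distrib_left by (auto intro: sum_mono)
  qed
qed

lemma mat_nontrivial_kernel:
  fixes M :: "real mat"
  assumes M: "M \<in> carrier_mat r s" and rs: "r < s"
  obtains y where "y \<in> carrier_vec s" and "y \<noteq> 0\<^sub>v s" and "M *\<^sub>v y = 0\<^sub>v r"
proof -
  define c where "c = (\<lambda>i. vec s (\<lambda>j. if i < r then M $$ (i,j) else (0::real)))"
  define M' where "M' = mat\<^sub>r s s (\<lambda>i. if i = r then 0\<^sub>v s else c i)"
  have M': "M' \<in> carrier_mat s s" unfolding M'_def by auto
  have "det M' = 0" unfolding M'_def by (rule det_row_0[OF rs], auto simp: c_def)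
  then obtain y where y: "y \<in> carrier_vec s" "y \<noteq> 0\<^sub>v s" "M' *\<^sub>v y = 0\<^sub>v s"
    using det_0_iff_vec_prod_zero[OF M'] by auto
  have "M *\<^sub>v y = 0\<^sub>v r"
  proof (rule eq_vecI)
    fix i assume "i < dim_vec (0\<^sub>v r :: real vec)"
    hence i: "i < r" by auto
    have "row M i = row M' i" using i rs M unfolding M'_def c_def by (auto simp: row_def)
    hence "(M *\<^sub>v y) $ i = (M' *\<^sub>v y) $ i" using i rs M M' by simp
    thus "(M *\<^sub>v y) $ i = 0\<^sub>v r $ i" using y(3) i rs by simp
  qed (insert M, auto)
  with y that show ?thesis by blast
qed

lemma three_mats_common_value:
  fixes F1 F2 F3 :: "real mat"
  assumes F1c: "F1 \<in> carrier_mat n p" and F2c: "F2 \<in> carrier_mat n q"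
    and F3c: "F3 \<in> carrier_mat n r" and dim: "2 * n < p + q + r"
  obtains a b c where "a \<in> carrier_vec p" "b \<in> carrier_vec q" "c \<in> carrier_vec r"
    and "a @\<^sub>v (b @\<^sub>v c) \<noteq> 0\<^sub>v (p + (q + r))"
    and "F1 *\<^sub>v a = F2 *\<^sub>v b" "F1 *\<^sub>v a = F3 *\<^sub>v c"
proof -
  define rf where "rf = (\<lambda>i. if i < n then row F1 i @\<^sub>v ((- row F2 i) @\<^sub>v 0\<^sub>v r)
     else row F1 (i - n) @\<^sub>v (0\<^sub>v q @\<^sub>v (- row F3 (i - n))))"
  have rfc: "rf i \<in> carrier_vec (p + (q + r))" if "i < 2 * n" for i
    using that F1c F2c F3c unfolding rf_def by (auto intro!: append_carrier_vec)
  define M where "M = mat (2 * n) (p + (q + r)) (\<lambda>(i,j). rf i $ j)"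
  have M: "M \<in> carrier_mat (2 * n) (p + (q + r))" unfolding M_def by auto
  have rowM: "row M i = rf i" if i: "i < 2 * n" for i
    using rfc[OF i] i unfolding M_def by (intro eq_vecI) auto
  obtain y where y: "y \<in> carrier_vec (p + (q + r))" "y \<noteq> 0\<^sub>v (p + (q + r))" "M *\<^sub>v y = 0\<^sub>v (2 * n)"
    using mat_nontrivial_kernel[OF M] dim by auto
  define a where "a = vec_first y p"
  define b where "b = vec_first (vec_last y (q + r)) q"
  define c where "c = vec_last (vec_last y (q + r)) r"
  have yabc: "y = a @\<^sub>v (b @\<^sub>v c)" unfolding a_def b_def c_def using y(1) by simp
  have a: "a \<in> carrier_vec p" and b: "b \<in> carrier_vec q" and c: "c \<in> carrier_vec r"
    unfolding a_def b_def c_def by auto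
  have row_eq: "0 = rf i \<bullet> y" if "i < 2 * n" for i
  proof -
    have "(M *\<^sub>v y) $ i = row M i \<bullet> y" using M that by simp
    thus ?thesis using y(3) that rowM[OF that] by simp
  qed
  have E1: "F1 *\<^sub>v a = F2 *\<^sub>v b"
  proof (rule eq_vecI)
    fix i assume "i < dim_vec (F2 *\<^sub>v b)"
    hence i: "i < n" using F2c by simp
    have "0 = row F1 i \<bullet> a + ((- row F2 i) \<bullet> b + 0\<^sub>v r \<bullet> c)"
      using row_eq[of i] i F1c F2c a b c unfolding rf_def yabc
      by (simp add: scalar_prod_append[of _ p _ "q + r"] scalar_prod_append[of _ q _ r])
    thus "(F1 *\<^sub>v a) $ i = (F2 *\<^sub>v b) $ i" using i F1c F2c a b c by simp
  qed (insert F1c F2c, simp)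
  have E2: "F1 *\<^sub>v a = F3 *\<^sub>v c"
  proof (rule eq_vecI)
    fix i assume "i < dim_vec (F3 *\<^sub>v c)"
    hence i: "i < n" using F3c by simp
    have "0 = row F1 i \<bullet> a + (0\<^sub>v q \<bullet> b + (- row F3 i) \<bullet> c)"
      using row_eq[of "n + i"] i F1c F3c a b c unfolding rf_def yabc
      by (simp add: scalar_prod_append[of _ p _ "q + r"] scalar_prod_append[of _ q _ r])
    thus "(F1 *\<^sub>v a) $ i = (F3 *\<^sub>v c) $ i" using i F1c F3c a b c by simp
  qed (insert F1c F3c, simp)
  show ?thesis using that a b c E1 E2 y(2) yabc by blast
qed

lemma three_ranges_intersect:
  assumes F1: "isometry_mat F1 n p" and F2: "isometry_mat F2 n q" and F3: "isometry_mat F3 n r"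
    and dim: "2 * n < p + q + r"
  obtains a b c where "a \<in> carrier_vec p" "b \<in> carrier_vec q" "c \<in> carrier_vec r"
    and "F1 *\<^sub>v a = F2 *\<^sub>v b" "F1 *\<^sub>v a = F3 *\<^sub>v c" "F1 *\<^sub>v a \<noteq> 0\<^sub>v n"
proof -
  obtain a b c where a: "a \<in> carrier_vec p" and b: "b \<in> carrier_vec q" and c: "c \<in> carrier_vec r"
    and nz: "a @\<^sub>v (b @\<^sub>v c) \<noteq> 0\<^sub>v (p + (q + r))"
    and E1: "F1 *\<^sub>v a = F2 *\<^sub>v b" and E2: "F1 *\<^sub>v a = F3 *\<^sub>v c"
    using three_mats_common_value[of F1 n p F2 q F3 r] F1 F2 F3 dim
    unfolding isometry_mat_def by blast
  have "F1 *\<^sub>v a \<noteq> 0\<^sub>v n"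
  proof
    assume z0: "F1 *\<^sub>v a = 0\<^sub>v n"
    have "a = 0\<^sub>v p" "b = 0\<^sub>v q" "c = 0\<^sub>v r"
      using isometry_mult_vec_eq_0[OF F1 a z0] isometry_mult_vec_eq_0[OF F2 b]
        isometry_mult_vec_eq_0[OF F3 c] E1 E2 z0 by auto
    hence "a @\<^sub>v (b @\<^sub>v c) = 0\<^sub>v (p + (q + r))" by (intro eq_vecI) auto
    thus False using nz by simp
  qed
  thus ?thesis using that a b c E1 E2 by blast
qed

lemma scalar_prod_self_pos:
  fixes x :: "real vec"
  assumes "x \<in> carrier_vec n" and "x \<noteq> 0\<^sub>v n"
  shows "0 < x \<bullet> x"
  using conjugate_square_greater_0_vec[OF assms(1)] assms(2) by simp

lemma isometry_one_mat: "isometry_mat (1\<^sub>m n) n n"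
  unfolding isometry_mat_def by simp

lemma eig_le_if_rayleigh_le:
  assumes S: "sym_mat A n" and k: "1 \<le> k" "k \<le> n"
    and F: "isometry_mat F n p" and H: "isometry_mat H n r" and dim: "n + k \<le> p + r"
    and bound: "\<And>x a b. a \<in> carrier_vec p \<Longrightarrow> b \<in> carrier_vec r \<Longrightarrow> x = F *\<^sub>v a \<Longrightarrow>
        x = H *\<^sub>v b \<Longrightarrow> x \<noteq> 0\<^sub>v n \<Longrightarrow> x \<bullet> (A *\<^sub>v x) \<le> c * (x \<bullet> x)"
  shows "eig A k \<le> c"
proof -
  have w: "k - 1 + (n - k + 1) \<le> n" using k by simp
  obtain Q where Q: "isometry_mat Q n (n - k + 1)"
    and low: "\<And>a. a \<in> carrier_vec (n - k + 1) \<Longrightarrow>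
      eig A (Suc (k - 1)) * ((Q *\<^sub>v a) \<bullet> (Q *\<^sub>v a)) \<le> (Q *\<^sub>v a) \<bullet> (A *\<^sub>v (Q *\<^sub>v a))"
    using eigen_window_isometry[OF S w] by blast
  have dim': "2 * n < (n - k + 1) + p + r" using dim k by simp
  obtain a0 a b where a0: "a0 \<in> carrier_vec (n - k + 1)" and a: "a \<in> carrier_vec p"
    and b: "b \<in> carrier_vec r" and e: "Q *\<^sub>v a0 = F *\<^sub>v a" "Q *\<^sub>v a0 = H *\<^sub>v b"
    and nz: "Q *\<^sub>v a0 \<noteq> 0\<^sub>v n"
    using three_ranges_intersect[OF Q F H dim'] by blast
  define x where "x = Q *\<^sub>v a0"
  have "eig A k * (x \<bullet> x) \<le> c * (x \<bullet> x)"
    using low[OF a0] bound[OF a b] e nz k unfolding x_def by fastforce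
  moreover have "x \<bullet> x > 0"
    using Q a0 nz unfolding x_def isometry_mat_def
    by (intro scalar_prod_self_pos[of _ n]) (auto intro: mult_mat_vec_carrier)
  ultimately show ?thesis by simp
qed

lemma eig_ge_if_rayleigh_ge:
  assumes S: "sym_mat A n" and k: "1 \<le> k" "k \<le> n"
    and F: "isometry_mat F n p" and H: "isometry_mat H n r" and dim: "2 * n < k + p + r"
    and bound: "\<And>x a b. a \<in> carrier_vec p \<Longrightarrow> b \<in> carrier_vec r \<Longrightarrow> x = F *\<^sub>v a \<Longrightarrow>
        x = H *\<^sub>v b \<Longrightarrow> x \<noteq> 0\<^sub>v n \<Longrightarrow> c * (x \<bullet> x) \<le> x \<bullet> (A *\<^sub>v x)"
  shows "c \<le> eig A k"
proof -
  obtain Q where Q: "isometry_mat Q n k"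
    and up: "\<And>a. a \<in> carrier_vec k \<Longrightarrow>
      (Q *\<^sub>v a) \<bullet> (A *\<^sub>v (Q *\<^sub>v a)) \<le> eig A k * ((Q *\<^sub>v a) \<bullet> (Q *\<^sub>v a))"
    using eigen_window_isometry[OF S, of 0 k] k by (metis add_0)
  obtain a0 a b where a0: "a0 \<in> carrier_vec k" and a: "a \<in> carrier_vec p"
    and b: "b \<in> carrier_vec r" and e: "Q *\<^sub>v a0 = F *\<^sub>v a" "Q *\<^sub>v a0 = H *\<^sub>v b"
    and nz: "Q *\<^sub>v a0 \<noteq> 0\<^sub>v n"
    using three_ranges_intersect[OF Q F H dim] by blast
  define x where "x = Q *\<^sub>v a0"
  have "c * (x \<bullet> x) \<le> eig A k * (x \<bullet> x)"
    using up[OF a0] bound[OF a b] e nz unfolding x_def by fastforce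
  moreover have "x \<bullet> x > 0"
    using Q a0 nz unfolding x_def isometry_mat_def
    by (intro scalar_prod_self_pos[of _ n]) (auto intro: mult_mat_vec_carrier)
  ultimately show ?thesis by simp
qed

lemma compressed_eigen_window:
  assumes SA: "sym_mat A m" and E: "isometry_mat Emb N m"
    and quad: "\<And>y. y \<in> carrier_vec m \<Longrightarrow>
      (Emb *\<^sub>v y) \<bullet> (G *\<^sub>v (Emb *\<^sub>v y)) = c * (y \<bullet> y) - y \<bullet> (A *\<^sub>v y)"
    and w: "s + w \<le> m"
  obtains F where "isometry_mat F N w"
    and "\<And>a. a \<in> carrier_vec w \<Longrightarrow>
      (c - eig A (s + w)) * ((F *\<^sub>v a) \<bullet> (F *\<^sub>v a)) \<le> (F *\<^sub>v a) \<bullet> (G *\<^sub>v (F *\<^sub>v a))"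
    and "\<And>a. a \<in> carrier_vec w \<Longrightarrow>
      (F *\<^sub>v a) \<bullet> (G *\<^sub>v (F *\<^sub>v a)) \<le> (c - eig A (Suc s)) * ((F *\<^sub>v a) \<bullet> (F *\<^sub>v a))"
proof -
  obtain Q where Q: "isometry_mat Q m w"
    and low: "\<And>a. a \<in> carrier_vec w \<Longrightarrow>
      eig A (Suc s) * ((Q *\<^sub>v a) \<bullet> (Q *\<^sub>v a)) \<le> (Q *\<^sub>v a) \<bullet> (A *\<^sub>v (Q *\<^sub>v a))"
    and up: "\<And>a. a \<in> carrier_vec w \<Longrightarrow>
      (Q *\<^sub>v a) \<bullet> (A *\<^sub>v (Q *\<^sub>v a)) \<le> eig A (s + w) * ((Q *\<^sub>v a) \<bullet> (Q *\<^sub>v a))"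
    using eigen_window_isometry[OF SA w] by blast
  have Ec: "Emb \<in> carrier_mat N m" and Qc: "Q \<in> carrier_mat m w"
    using E Q unfolding isometry_mat_def by auto
  show ?thesis
  proof (rule that)
    show "isometry_mat (Emb * Q) N w" by (rule isometry_mat_mult[OF E Q])
  next
    fix a :: "real vec" assume a: "a \<in> carrier_vec w"
    define y where "y = Q *\<^sub>v a"
    have y: "y \<in> carrier_vec m" unfolding y_def using Qc a by simp
    have Fa: "Emb * Q *\<^sub>v a = Emb *\<^sub>v y" unfolding y_def using Ec Qc a by simp
    have yy: "(Emb *\<^sub>v y) \<bullet> (Emb *\<^sub>v y) = y \<bullet> y" by (rule isometry_scalar_prod[OF E y y])
    show "(c - eig A (s + w)) * ((Emb * Q *\<^sub>v a) \<bullet> (Emb * Q *\<^sub>v a))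
        \<le> (Emb * Q *\<^sub>v a) \<bullet> (G *\<^sub>v (Emb * Q *\<^sub>v a))"
      unfolding Fa quad[OF y] yy using up[OF a] unfolding y_def by (simp add: algebra_simps)
    show "(Emb * Q *\<^sub>v a) \<bullet> (G *\<^sub>v (Emb * Q *\<^sub>v a))
        \<le> (c - eig A (Suc s)) * ((Emb * Q *\<^sub>v a) \<bullet> (Emb * Q *\<^sub>v a))"
      unfolding Fa quad[OF y] yy using low[OF a] unfolding y_def by (simp add: algebra_simps)
  qed
qed

lemma interlacing_reflected:
  assumes SG: "sym_mat G N" and SA: "sym_mat A m" and E: "isometry_mat Emb N m"
    and quad: "\<And>y. y \<in> carrier_vec m \<Longrightarrow>
      (Emb *\<^sub>v y) \<bullet> (G *\<^sub>v (Emb *\<^sub>v y)) = c * (y \<bullet> y) - y \<bullet> (A *\<^sub>v y)"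
    and mN: "m \<le> N" and j: "1 \<le> j" "j \<le> m"
  shows "eig G j \<le> c - eig A (m - j + 1)" and "c - eig A j \<le> eig G (N - j + 1)"
proof -
  obtain F where F: "isometry_mat F N j"
    and up: "\<And>a. a \<in> carrier_vec j \<Longrightarrow>
      (F *\<^sub>v a) \<bullet> (G *\<^sub>v (F *\<^sub>v a)) \<le> (c - eig A (Suc (m - j))) * ((F *\<^sub>v a) \<bullet> (F *\<^sub>v a))"
    using compressed_eigen_window[OF SA E quad, of "m - j" j] j by (metis le_add_diff_inverse2 order_refl)
  show "eig G j \<le> c - eig A (m - j + 1)"
    by (rule eig_le_if_rayleigh_le[OF SG j(1) _ F isometry_one_mat])
      (use mN j up in auto)
  obtain F where F: "isometry_mat F N j"
    and low: "\<And>a. a \<in> carrier_vec j \<Longrightarrow>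
      (c - eig A j) * ((F *\<^sub>v a) \<bullet> (F *\<^sub>v a)) \<le> (F *\<^sub>v a) \<bullet> (G *\<^sub>v (F *\<^sub>v a))"
    using compressed_eigen_window[OF SA E quad, of 0 j] j by (metis add_0)
  show "c - eig A j \<le> eig G (N - j + 1)"
    by (rule eig_ge_if_rayleigh_ge[OF SG _ _ F isometry_one_mat])
      (use mN j low in auto)
qed

definition unit_cols :: "nat \<Rightarrow> nat \<Rightarrow> (nat \<Rightarrow> nat) \<Rightarrow> real mat" where
  "unit_cols n p \<sigma> = mat n p (\<lambda>(i,l). if i = \<sigma> l then 1 else 0)"

lemma col_unit_cols: "l < p \<Longrightarrow> \<sigma> l < n \<Longrightarrow> col (unit_cols n p \<sigma>) l = unit_vec n (\<sigma> l)"
  unfolding unit_cols_def by (intro eq_vecI) auto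

lemma unit_cols_isometry:
  assumes \<sigma>: "\<forall>l<p. \<sigma> l < n" and inj: "inj_on \<sigma> {..<p}"
  shows "isometry_mat (unit_cols n p \<sigma>) n p"
proof -
  define units :: "real vec list" where "units = map (unit_vec n) [0..<n]"
  have "unit_cols n p \<sigma> = select_cols units n p \<sigma>"
    using \<sigma> unfolding unit_cols_def select_cols_def units_def by (intro eq_matI) auto
  moreover have "\<forall>i<n. units ! i \<in> carrier_vec n"
    and "\<forall>i<n. \<forall>j<n. units ! i \<bullet> units ! j = (if i = j then 1 else 0)"
    unfolding units_def by auto
  ultimately show ?thesis using select_cols_isometry(1)[OF _ _ \<sigma> inj] by simp
qed

lemma unit_cols_compression:
  assumes M: "M \<in> carrier_mat n n" and \<sigma>: "\<forall>l<p. \<sigma> l < n"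
  shows "transpose_mat (unit_cols n p \<sigma>) * M * unit_cols n p \<sigma> = mat p p (\<lambda>(l,l'). M $$ (\<sigma> l, \<sigma> l'))"
proof (rule eq_matI)
  let ?E = "unit_cols n p \<sigma>"
  have E: "?E \<in> carrier_mat n p" unfolding unit_cols_def by simp
  fix l l' assume "l < dim_row (mat p p (\<lambda>(l,l'). M $$ (\<sigma> l, \<sigma> l')))"
    "l' < dim_col (mat p p (\<lambda>(l,l'). M $$ (\<sigma> l, \<sigma> l')))"
  hence l: "l < p" "l' < p" by auto
  have "(transpose_mat ?E * M * ?E) $$ (l,l') = (transpose_mat ?E * (M * ?E)) $$ (l,l')"
    using E M by (simp add: assoc_mult_mat[of _ p n _ n _ p])
  also have "\<dots> = unit_vec n (\<sigma> l) \<bullet> (M *\<^sub>v unit_vec n (\<sigma> l'))"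
    using E M l \<sigma> by (simp add: col_unit_cols)
  also have "\<dots> = M $$ (\<sigma> l, \<sigma> l')" using M l \<sigma> by simp
  finally show "(transpose_mat ?E * M * ?E) $$ (l,l') = mat p p (\<lambda>(l,l'). M $$ (\<sigma> l, \<sigma> l')) $$ (l,l')"
    using l by simp
qed (auto simp: unit_cols_def)

lemma unit_cols_mult_vec_outside:
  assumes "b \<in> carrier_vec p" and "i < n" and "i \<notin> \<sigma> ` {..<p}"
  shows "(unit_cols n p \<sigma> *\<^sub>v b) $ i = 0"
  using assms unfolding unit_cols_def
  by (auto simp: scalar_prod_def intro!: sum.neutral)

lemma coordinate_isometry:
  assumes J: "J \<subseteq> {..<m}"
  obtains H where "isometry_mat H m (card J)"
    and "\<And>b i. b \<in> carrier_vec (card J) \<Longrightarrow> i < m \<Longrightarrow> i \<notin> J \<Longrightarrow> (H *\<^sub>v b) $ i = 0"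
proof -
  define \<sigma> where "\<sigma> = (\<lambda>l. sorted_list_of_set J ! l)"
  have fin: "finite J" using J finite_subset by blast
  have \<sigma>J: "\<sigma> ` {..<card J} = J"
    using nth_image[of "card J" "sorted_list_of_set J"] fin unfolding \<sigma>_def lessThan_atLeast0
    by simp
  have inj: "inj_on \<sigma> {..<card J}" unfolding \<sigma>_def
    by (rule inj_onI) (auto simp: nth_eq_iff_index_eq)
  have "\<forall>l<card J. \<sigma> l < m" using \<sigma>J J by auto
  thus ?thesis using that unit_cols_isometry[OF _ inj] unit_cols_mult_vec_outside \<sigma>J by metis
qed

lemma weighted_sum_squares_bounds:
  fixes x :: "real vec"
  assumes x: "x \<in> carrier_vec m" and z: "\<forall>i<m. i \<notin> J \<longrightarrow> x $ i = 0"
  shows "\<forall>i\<in>J. c \<le> d i \<Longrightarrow> c * (x \<bullet> x) \<le> (\<Sum>l<m. d l * (x $ l)^2)"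
    and "\<forall>i\<in>J. d i \<le> c \<Longrightarrow> (\<Sum>l<m. d l * (x $ l)^2) \<le> c * (x \<bullet> x)"
proof -
  have xx: "c * (x \<bullet> x) = (\<Sum>l<m. c * (x $ l)^2)" using x
    unfolding power2_eq_square by (auto simp: scalar_prod_def atLeast0LessThan sum_distrib_left)
  show "c * (x \<bullet> x) \<le> (\<Sum>l<m. d l * (x $ l)^2)" if "\<forall>i\<in>J. c \<le> d i"
    unfolding xx using z that by (intro sum_mono) (force intro: mult_right_mono)
  show "(\<Sum>l<m. d l * (x $ l)^2) \<le> c * (x \<bullet> x)" if "\<forall>i\<in>J. d i \<le> c"
    unfolding xx using z that by (intro sum_mono) (force intro: mult_right_mono)
qed

lemma eig_ge_diag_minus:
  assumes SA: "sym_mat A m" and SL: "sym_mat L m"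
    and quad: "\<And>y. y \<in> carrier_vec m \<Longrightarrow> y \<bullet> (A *\<^sub>v y) = (\<Sum>l<m. d l * (y $ l)^2) - y \<bullet> (L *\<^sub>v y)"
    and it: "1 \<le> i" "i \<le> t" "t \<le> m"
    and J: "J \<subseteq> {..<m}" and cJ: "m - t + i \<le> card J" and Jd: "\<forall>l\<in>J. c \<le> d l"
  shows "c - eig L t \<le> eig A (m - i + 1)"
proof -
  obtain F where F: "isometry_mat F m t"
    and up: "\<And>a. a \<in> carrier_vec t \<Longrightarrow>
      (F *\<^sub>v a) \<bullet> (L *\<^sub>v (F *\<^sub>v a)) \<le> eig L t * ((F *\<^sub>v a) \<bullet> (F *\<^sub>v a))"
    using eigen_window_isometry[OF SL, of 0 t] it by (metis add_0)
  obtain H where H: "isometry_mat H m (card J)"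
    and Hz: "\<And>b i. b \<in> carrier_vec (card J) \<Longrightarrow> i < m \<Longrightarrow> i \<notin> J \<Longrightarrow> (H *\<^sub>v b) $ i = 0"
    using coordinate_isometry[OF J] by blast
  show ?thesis
  proof (rule eig_ge_if_rayleigh_ge[OF SA _ _ F H])
    fix x a b assume a: "a \<in> carrier_vec t" and b: "b \<in> carrier_vec (card J)"
      and xa: "x = F *\<^sub>v a" and xb: "x = H *\<^sub>v b"
    have x: "x \<in> carrier_vec m" using F a xa unfolding isometry_mat_def by auto
    have "(c - eig L t) * (x \<bullet> x) \<le> (\<Sum>l<m. d l * (x $ l)^2) - x \<bullet> (L *\<^sub>v x)"
      using weighted_sum_squares_bounds(1)[OF x _ Jd] Hz[OF b] up[OF a] xa xb
      by (auto simp: algebra_simps)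
    thus "(c - eig L t) * (x \<bullet> x) \<le> x \<bullet> (A *\<^sub>v x)" using quad[OF x] by simp
  qed (use it cJ in auto)
qed

lemma eig_le_diag_minus:
  assumes SA: "sym_mat A m" and SL: "sym_mat L m"
    and quad: "\<And>y. y \<in> carrier_vec m \<Longrightarrow> y \<bullet> (A *\<^sub>v y) = (\<Sum>l<m. d l * (y $ l)^2) - y \<bullet> (L *\<^sub>v y)"
    and js: "1 \<le> j" "j \<le> s" "s \<le> m"
    and J: "J \<subseteq> {..<m}" and cJ: "m - s + j \<le> card J" and Jd: "\<forall>l\<in>J. d l \<le> c"
  shows "eig A j \<le> c - eig L (m - s + 1)"
proof -
  have w: "m - s + s \<le> m" using js by simp
  obtain F where F: "isometry_mat F m s"
    and low: "\<And>a. a \<in> carrier_vec s \<Longrightarrow>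
      eig L (Suc (m - s)) * ((F *\<^sub>v a) \<bullet> (F *\<^sub>v a)) \<le> (F *\<^sub>v a) \<bullet> (L *\<^sub>v (F *\<^sub>v a))"
    using eigen_window_isometry[OF SL w] by blast
  obtain H where H: "isometry_mat H m (card J)"
    and Hz: "\<And>b i. b \<in> carrier_vec (card J) \<Longrightarrow> i < m \<Longrightarrow> i \<notin> J \<Longrightarrow> (H *\<^sub>v b) $ i = 0"
    using coordinate_isometry[OF J] by blast
  show ?thesis
  proof (rule eig_le_if_rayleigh_le[OF SA _ _ F H])
    fix x a b assume a: "a \<in> carrier_vec s" and b: "b \<in> carrier_vec (card J)"
      and xa: "x = F *\<^sub>v a" and xb: "x = H *\<^sub>v b"
    have x: "x \<in> carrier_vec m" using F a xa unfolding isometry_mat_def by auto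
    have "(\<Sum>l<m. d l * (x $ l)^2) - x \<bullet> (L *\<^sub>v x) \<le> (c - eig L (m - s + 1)) * (x \<bullet> x)"
      using weighted_sum_squares_bounds(2)[OF x _ Jd] Hz[OF b] low[OF a] xa xb
      by (auto simp: algebra_simps)
    thus "x \<bullet> (A *\<^sub>v x) \<le> (c - eig L (m - s + 1)) * (x \<bullet> x)" using quad[OF x] by simp
  qed (use js cJ in auto)
qed

section \<open>Adjacency and Laplacian matrices of graphs\<close>

lemma compression_quadratic_form:
  fixes E M :: "real mat"
  assumes E: "E \<in> carrier_mat n p" and M: "M \<in> carrier_mat n n" and y: "y \<in> carrier_vec p"
  shows "(E *\<^sub>v y) \<bullet> (M *\<^sub>v (E *\<^sub>v y)) = y \<bullet> ((transpose_mat E * M * E) *\<^sub>v y)"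
proof -
  have Ey: "E *\<^sub>v y \<in> carrier_vec n" and MEy: "M *\<^sub>v (E *\<^sub>v y) \<in> carrier_vec n" using E M y by auto
  have "(E *\<^sub>v y) \<bullet> (M *\<^sub>v (E *\<^sub>v y)) = (transpose_mat E *\<^sub>v (M *\<^sub>v (E *\<^sub>v y))) \<bullet> y"
    using transpose_vec_mult_scalar[OF E y MEy] comm_scalar_prod[OF Ey MEy] by simp
  also have "transpose_mat E *\<^sub>v (M *\<^sub>v (E *\<^sub>v y)) = (transpose_mat E * M * E) *\<^sub>v y"
  proof -
    have EM: "transpose_mat E * M \<in> carrier_mat p n" using E M by simp
    have "(transpose_mat E * M * E) *\<^sub>v y = (transpose_mat E * M) *\<^sub>v (E *\<^sub>v y)"
      by (rule assoc_mult_mat_vec[OF EM E y])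
    also have "\<dots> = transpose_mat E *\<^sub>v (M *\<^sub>v (E *\<^sub>v y))"
      by (rule assoc_mult_mat_vec[OF _ M Ey], insert E, simp)
    finally show ?thesis by simp
  qed
  finally have "(E *\<^sub>v y) \<bullet> (M *\<^sub>v (E *\<^sub>v y)) = ((transpose_mat E * M * E) *\<^sub>v y) \<bullet> y" .
  moreover have "(transpose_mat E * M * E) *\<^sub>v y \<in> carrier_vec p"
    using E M by (intro mult_mat_vec_carrier[OF _ y]) auto
  ultimately show ?thesis using comm_scalar_prod[OF _ y] by metis
qed

lemma diag_minus_mult_vec:
  fixes B :: "real mat"
  assumes B: "B \<in> carrier_mat m m" and y: "y \<in> carrier_vec m" and i: "i < m"
  shows "(mat m m (\<lambda>(i,j). (if i = j then d i else 0) - B $$ (i,j)) *\<^sub>v y) $ i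
    = d i * y $ i - (B *\<^sub>v y) $ i"
proof -
  have "(mat m m (\<lambda>(i,j). (if i = j then d i else 0) - B $$ (i,j)) *\<^sub>v y) $ i
      = (\<Sum>j<m. (if i = j then d i * y $ j else 0) - B $$ (i,j) * y $ j)"
    using i y by (auto simp: scalar_prod_def atLeast0LessThan left_diff_distrib intro!: sum.cong)
  also have "\<dots> = d i * y $ i - (B *\<^sub>v y) $ i"
    using i y B by (auto simp: sum_subtractf scalar_prod_def atLeast0LessThan)
  finally show ?thesis .
qed

lemma diag_minus_quadratic_form:
  fixes B :: "real mat"
  assumes B: "B \<in> carrier_mat m m" and y: "y \<in> carrier_vec m"
  shows "y \<bullet> (mat m m (\<lambda>(i,j). (if i = j then d i else 0) - B $$ (i,j)) *\<^sub>v y)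
     = (\<Sum>l<m. d l * (y $ l)^2) - y \<bullet> (B *\<^sub>v y)"
proof -
  have "y \<bullet> (mat m m (\<lambda>(i,j). (if i = j then d i else 0) - B $$ (i,j)) *\<^sub>v y)
      = (\<Sum>i<m. y $ i * (d i * y $ i - (B *\<^sub>v y) $ i))"
    using y diag_minus_mult_vec[OF B y] by (auto simp: scalar_prod_def atLeast0LessThan)
  also have "\<dots> = (\<Sum>l<m. d l * (y $ l)^2) - y \<bullet> (B *\<^sub>v y)"
    using y B by (simp add: scalar_prod_def atLeast0LessThan sum_subtractf[symmetric]
        right_diff_distrib power2_eq_square mult_ac)
  finally show ?thesis .
qed

lemma vlist_props:
  assumes "finite S"
  shows "distinct (vlist S)" "set (vlist S) = S" "length (vlist S) = card S"
proof -
  have "\<exists>xs. distinct xs \<and> set xs = S" using finite_distinct_list[OF assms] by auto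
  hence "distinct (vlist S) \<and> set (vlist S) = S" unfolding vlist_def by (rule someI_ex)
  thus "distinct (vlist S)" "set (vlist S) = S" by auto
  thus "length (vlist S) = card S" using distinct_card by metis
qed

lemma card_vlist_indices:
  assumes "finite S"
  shows "card {l. l < length (vlist S) \<and> P (vlist S ! l)} = card {a \<in> S. P a}"
proof -
  note v = vlist_props[OF assms]
  have "inj_on ((!) (vlist S)) {l. l < length (vlist S) \<and> P (vlist S ! l)}"
    using v(1) by (intro inj_onI) (simp add: nth_eq_iff_index_eq)
  moreover have "(!) (vlist S) ` {l. l < length (vlist S) \<and> P (vlist S ! l)} = {a \<in> S. P a}"
  proof
    show "(!) (vlist S) ` {l. l < length (vlist S) \<and> P (vlist S ! l)} \<subseteq> {a \<in> S. P a}"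
      using v(2) by force
    show "{a \<in> S. P a} \<subseteq> (!) (vlist S) ` {l. l < length (vlist S) \<and> P (vlist S ! l)}"
    proof
      fix a assume a: "a \<in> {a \<in> S. P a}"
      then obtain l where "l < length (vlist S)" "vlist S ! l = a"
        using v(2) by (metis (mono_tags) in_set_conv_nth mem_Collect_eq)
      thus "a \<in> (!) (vlist S) ` {l. l < length (vlist S) \<and> P (vlist S ! l)}" using a by force
    qed
  qed
  ultimately show ?thesis using card_image by fastforce
qed

lemma adjacency_mat_carrier: "adjacency_mat S E \<in> carrier_mat (length (vlist S)) (length (vlist S))"
  unfolding adjacency_mat_def Let_def by auto

lemma laplacian_mat_carrier: "laplacian_mat S E \<in> carrier_mat (length (vlist S)) (length (vlist S))"
  unfolding laplacian_mat_def Let_def by auto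

lemma sym_adjacency_mat:
  assumes "\<And>p q. E p q \<Longrightarrow> E q p"
  shows "sym_mat (adjacency_mat S E) (length (vlist S))"
  unfolding sym_mat_def adjacency_mat_def Let_def using assms by auto

lemma sym_laplacian_mat:
  assumes "\<And>p q. E p q \<Longrightarrow> E q p"
  shows "sym_mat (laplacian_mat S E) (length (vlist S))"
  unfolding sym_mat_def laplacian_mat_def Let_def using assms by auto

lemma laplacian_mat_eq_diag_minus_adjacency:
  "laplacian_mat S E = mat (length (vlist S)) (length (vlist S))
     (\<lambda>(i,j). (if i = j then real (graph_degree S E (vlist S ! i)) else 0) - adjacency_mat S E $$ (i,j))"
  unfolding laplacian_mat_def adjacency_mat_def Let_def by (intro eq_matI) auto

lemma adjacency_quadratic_form:
  assumes y: "y \<in> carrier_vec (length (vlist S))"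
  shows "y \<bullet> (adjacency_mat S E *\<^sub>v y)
    = (\<Sum>l<length (vlist S). real (graph_degree S E (vlist S ! l)) * (y $ l)^2)
      - y \<bullet> (laplacian_mat S E *\<^sub>v y)"
  unfolding laplacian_mat_eq_diag_minus_adjacency[of S E]
    diag_minus_quadratic_form[OF adjacency_mat_carrier y] by simp

lemma laplacian_mult_ones:
  assumes fin: "finite S"
  shows "laplacian_mat S E *\<^sub>v vec (length (vlist S)) (\<lambda>_. 1) = 0\<^sub>v (length (vlist S))"
proof (rule eq_vecI)
  let ?vs = "vlist S" let ?n = "length ?vs"
  fix i assume "i < dim_vec (0\<^sub>v ?n :: real vec)"
  hence i: "i < ?n" by simp
  have "(adjacency_mat S E *\<^sub>v vec ?n (\<lambda>_. 1)) $ i = (\<Sum>j<?n. if E (?vs ! i) (?vs ! j) then 1 else 0)"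
    using i unfolding adjacency_mat_def Let_def by (simp add: scalar_prod_def atLeast0LessThan)
  also have "\<dots> = (\<Sum>j | j < ?n \<and> E (?vs ! i) (?vs ! j). 1)"
    by (rule sum.mono_neutral_cong_right) auto
  also have "\<dots> = real (graph_degree S E (?vs ! i))"
    unfolding graph_degree_def using card_vlist_indices[OF fin, of "E (?vs ! i)"] by simp
  moreover have "(laplacian_mat S E *\<^sub>v vec ?n (\<lambda>_. 1)) $ i
      = real (graph_degree S E (?vs ! i)) * vec ?n (\<lambda>_. 1) $ i
        - (adjacency_mat S E *\<^sub>v vec ?n (\<lambda>_. 1)) $ i"
    unfolding laplacian_mat_eq_diag_minus_adjacency[of S E]
    by (rule diag_minus_mult_vec[OF adjacency_mat_carrier _ i]) simp
  ultimately show "(laplacian_mat S E *\<^sub>v vec ?n (\<lambda>_. 1)) $ i = 0\<^sub>v ?n $ i" using i by simp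
qed (simp add: laplacian_mat_def Let_def)

lemma laplacian_eig_bounds:
  assumes fin: "finite S" and sym: "\<And>p q. E p q \<Longrightarrow> E q p" and ne: "S \<noteq> {}"
  shows "eig (laplacian_mat S E) 1 \<le> 0" and "0 \<le> eig (laplacian_mat S E) (card S)"
proof -
  let ?n = "length (vlist S)"
  have n: "?n = card S" "0 < ?n" using vlist_props[OF fin] fin ne by auto
  have "vec ?n (\<lambda>_. 1) \<noteq> (0\<^sub>v ?n :: real vec)"
    using n(2) by (metis index_vec index_zero_vec(1) zero_neq_one)
  moreover have "dim_row (laplacian_mat S E) = ?n" using laplacian_mat_carrier[of S E] by simp
  ultimately have "eigenvector (laplacian_mat S E) (vec ?n (\<lambda>_. 1)) 0"
    unfolding eigenvector_def using laplacian_mult_ones[OF fin] by (auto intro!: eq_vecI)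
  hence "eigenvalue (laplacian_mat S E) 0" unfolding eigenvalue_def by blast
  thus "eig (laplacian_mat S E) 1 \<le> 0" and "0 \<le> eig (laplacian_mat S E) (card S)"
    using eigenvalue_between_eigs[OF sym_laplacian_mat[of E S, OF sym]] n(1) by auto
qed

lemma vlist_positions:
  assumes finT: "finite T" and finS: "finite S" and \<iota>: "\<iota> ` S \<subseteq> T" "inj_on \<iota> S"
  obtains pos where "\<And>l. l < card S \<Longrightarrow> pos l < card T \<and> vlist T ! pos l = \<iota> (vlist S ! l)"
    and "\<And>l l'. l < card S \<Longrightarrow> l' < card S \<Longrightarrow> pos l = pos l' \<longleftrightarrow> l = l'"
proof -
  note vT = vlist_props[OF finT] and vS = vlist_props[OF finS]
  have vSl: "vlist S ! l \<in> S" if "l < card S" for l using vS that by (metis nth_mem)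
  have "\<exists>i. i < card T \<and> vlist T ! i = \<iota> (vlist S ! l)" if "l < card S" for l
    using vT \<iota>(1) vSl[OF that] by (metis image_subset_iff in_set_conv_nth)
  then obtain pos where pos: "\<And>l. l < card S \<Longrightarrow> pos l < card T \<and> vlist T ! pos l = \<iota> (vlist S ! l)"
    by metis
  have "pos l = pos l' \<longleftrightarrow> l = l'" if "l < card S" "l' < card S" for l l'
  proof
    assume "pos l = pos l'"
    hence "\<iota> (vlist S ! l) = \<iota> (vlist S ! l')" using pos that by metis
    hence "vlist S ! l = vlist S ! l'" using inj_onD[OF \<iota>(2)] vSl that by blast
    thus "l = l'" using vS(1,3) that by (simp add: nth_eq_iff_index_eq)
  qed simp
  thus ?thesis using that pos by blast
qed

lemma laplacian_compression_regular_induced: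
  fixes ET :: "'a \<Rightarrow> 'a \<Rightarrow> bool" and ES :: "'b \<Rightarrow> 'b \<Rightarrow> bool"
  assumes finT: "finite T" and finS: "finite S" and \<iota>: "\<iota> ` S \<subseteq> T" "inj_on \<iota> S"
    and deg: "\<And>a. a \<in> S \<Longrightarrow> graph_degree T ET (\<iota> a) = c"
    and adj: "\<And>a b. a \<in> S \<Longrightarrow> b \<in> S \<Longrightarrow> ET (\<iota> a) (\<iota> b) = ES a b"
  obtains Emb where "isometry_mat Emb (card T) (card S)"
    and "\<And>y. y \<in> carrier_vec (card S) \<Longrightarrow>
      (Emb *\<^sub>v y) \<bullet> (laplacian_mat T ET *\<^sub>v (Emb *\<^sub>v y))
        = real c * (y \<bullet> y) - y \<bullet> (adjacency_mat S ES *\<^sub>v y)"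
proof -
  let ?vT = "vlist T" and ?vS = "vlist S" and ?m = "card S"
  note vT = vlist_props[OF finT] and vS = vlist_props[OF finS]
  have vSl: "?vS ! l \<in> S" if "l < ?m" for l using vS that by (metis nth_mem)
  obtain pos where pos: "\<And>l. l < ?m \<Longrightarrow> pos l < card T \<and> ?vT ! pos l = \<iota> (?vS ! l)"
    and pos_eq: "\<And>l l'. l < ?m \<Longrightarrow> l' < ?m \<Longrightarrow> pos l = pos l' \<longleftrightarrow> l = l'"
    using vlist_positions[OF finT finS \<iota>] by blast
  have inj: "inj_on pos {..<?m}" using pos_eq by (auto intro: inj_onI)
  define Emb where "Emb = unit_cols (card T) ?m pos"
  have Ec: "Emb \<in> carrier_mat (card T) ?m" unfolding Emb_def unit_cols_def by simp
  have LT: "laplacian_mat T ET \<in> carrier_mat (card T) (card T)"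
    using laplacian_mat_carrier[of T ET] vT(3) by simp
  have A: "adjacency_mat S ES \<in> carrier_mat ?m ?m"
    using adjacency_mat_carrier[of S ES] vS(3) by simp
  have "transpose_mat Emb * laplacian_mat T ET * Emb
      = mat ?m ?m (\<lambda>(l,l'). laplacian_mat T ET $$ (pos l, pos l'))"
    unfolding Emb_def using pos by (intro unit_cols_compression[OF LT]) auto
  also have "\<dots> = mat ?m ?m (\<lambda>(l,l'). (if l = l' then real c else 0) - adjacency_mat S ES $$ (l,l'))"
    using pos pos_eq deg vSl adj vT(3) vS(3)
    by (intro eq_matI) (auto simp: laplacian_mat_def adjacency_mat_def Let_def)
  finally have comp: "transpose_mat Emb * laplacian_mat T ET * Emb
      = mat ?m ?m (\<lambda>(l,l'). (if l = l' then real c else 0) - adjacency_mat S ES $$ (l,l'))" .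
  have "(Emb *\<^sub>v y) \<bullet> (laplacian_mat T ET *\<^sub>v (Emb *\<^sub>v y))
      = real c * (y \<bullet> y) - y \<bullet> (adjacency_mat S ES *\<^sub>v y)" if y: "y \<in> carrier_vec ?m" for y
  proof -
    have "(\<Sum>l<?m. real c * (y $ l)^2) = real c * (y \<bullet> y)" using y
      by (auto simp: scalar_prod_def atLeast0LessThan sum_distrib_left power2_eq_square)
    thus ?thesis unfolding compression_quadratic_form[OF Ec LT y] comp
      using diag_minus_quadratic_form[OF A y, of "\<lambda>_. real c"] by simp
  qed
  moreover have "isometry_mat Emb (card T) ?m"
    unfolding Emb_def using pos inj by (intro unit_cols_isometry) auto
  ultimately show ?thesis using that by blast
qed

section \<open>The (k,0)-cluster\<close>

lemma tri_verts_Suc: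
  "tri_verts (Suc k) = tri_verts k \<union> {Up a b | a b. a + b = k} \<union> {Dn a b | a b. a + b + 1 = k}"
  unfolding tri_verts_def by auto

lemma finite_tri_verts: "finite (tri_verts k)"
proof -
  have "tri_verts k \<subseteq> (\<lambda>(a,b). Up a b) ` ({..<k} \<times> {..<k}) \<union> (\<lambda>(a,b). Dn a b) ` ({..<k} \<times> {..<k})"
    unfolding tri_verts_def by force
  thus ?thesis by (rule finite_subset, auto)
qed

lemma card_tri_verts: "card (tri_verts k) = k^2"
proof (induct k)
  case 0
  have "tri_verts 0 = {}" unfolding tri_verts_def by auto
  thus ?case by simp
next
  case (Suc k)
  let ?U = "{Up a b | a b. a + b = k}" and ?D = "{Dn a b | a b. a + b + 1 = k}"
  have U: "?U = (\<lambda>a. Up a (k - a)) ` {..k}" by force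
  have cU: "card ?U = k + 1" unfolding U by (subst card_image, auto intro: inj_onI)
  have D: "?D = (\<lambda>a. Dn a (k - 1 - a)) ` {..<k}" by force
  have cD: "card ?D = k" unfolding D by (subst card_image, auto intro: inj_onI)
  have d1: "tri_verts k \<inter> ?U = {}" unfolding tri_verts_def by auto
  have d2: "(tri_verts k \<union> ?U) \<inter> ?D = {}" unfolding tri_verts_def by auto
  have fU: "finite ?U" unfolding U by simp
  have fD: "finite ?D" unfolding D by simp
  have "card (tri_verts (Suc k)) = card (tri_verts k \<union> ?U) + card ?D"
    unfolding tri_verts_Suc by (rule card_Un_disjoint[OF _ fD d2], insert finite_tri_verts fU, auto)
  also have "card (tri_verts k \<union> ?U) = card (tri_verts k) + card ?U"
    by (rule card_Un_disjoint[OF finite_tri_verts fU d1])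
  finally show ?case unfolding Suc cU cD by (simp add: power2_eq_square)
qed

abbreviation cluster_deg :: "nat \<Rightarrow> tri \<Rightarrow> nat" where
  "cluster_deg k a \<equiv> graph_degree (tri_verts k) (cluster_adj k) a"

lemma cluster_neighbours_up:
  assumes xy: "x + y < k"
  shows "{q \<in> tri_verts k. cluster_adj k (Up x y) q}
    = (if x + y + 1 < k then {Dn x y} else {}) \<union> (if 1 \<le> x then {Dn (x - 1) y} else {})
      \<union> (if 1 \<le> y then {Dn x (y - 1)} else {})"
proof (intro equalityI subsetI)
  fix q assume "q \<in> {q \<in> tri_verts k. cluster_adj k (Up x y) q}"
  thus "q \<in> (if x + y + 1 < k then {Dn x y} else {}) \<union> (if 1 \<le> x then {Dn (x - 1) y} else {})
      \<union> (if 1 \<le> y then {Dn x (y - 1)} else {})"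
    unfolding cluster_adj_def tri_verts_def by (cases q) auto
next
  fix q assume "q \<in> (if x + y + 1 < k then {Dn x y} else {}) \<union> (if 1 \<le> x then {Dn (x - 1) y} else {})
      \<union> (if 1 \<le> y then {Dn x (y - 1)} else {})"
  thus "q \<in> {q \<in> tri_verts k. cluster_adj k (Up x y) q}"
    using xy unfolding cluster_adj_def tri_verts_def by (auto split: if_splits)
qed

lemma cluster_deg_up:
  assumes xy: "x + y < k"
  shows "cluster_deg k (Up x y) = of_bool (x + y + 1 < k) + of_bool (1 \<le> x) + of_bool (1 \<le> y)"
  unfolding graph_degree_def cluster_neighbours_up[OF xy]
  by (cases "x + y + 1 < k"; cases "1 \<le> x"; cases "1 \<le> y") (auto simp: card_insert_if)

lemma cluster_neighbours_dn:
  assumes xy: "x + y + 1 < k"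
  shows "{q \<in> tri_verts k. cluster_adj k (Dn x y) q} = {Up x y, Up (x + 1) y, Up x (y + 1)}"
proof (intro equalityI subsetI)
  fix q assume "q \<in> {q \<in> tri_verts k. cluster_adj k (Dn x y) q}"
  thus "q \<in> {Up x y, Up (x + 1) y, Up x (y + 1)}" unfolding cluster_adj_def by (cases q) auto
next
  fix q assume "q \<in> {Up x y, Up (x + 1) y, Up x (y + 1)}"
  thus "q \<in> {q \<in> tri_verts k. cluster_adj k (Dn x y) q}"
    using xy unfolding cluster_adj_def tri_verts_def by auto
qed

lemma cluster_deg_dn: "x + y + 1 < k \<Longrightarrow> cluster_deg k (Dn x y) = 3"
  unfolding graph_degree_def by (simp add: cluster_neighbours_dn)

definition tri_sides :: "nat \<Rightarrow> tri \<Rightarrow> nat set" where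
  "tri_sides k a = {i. i < 3 \<and> (\<exists>t<k. a = side_tri k i t)}"

lemma tri_sides_up:
  assumes xy: "x + y < k"
  shows "tri_sides k (Up x y)
    = (if y = 0 then {0} else {}) \<union> (if x + y + 1 = k then {1} else {}) \<union> (if x = 0 then {2} else {})"
proof (intro equalityI subsetI)
  fix i assume "i \<in> tri_sides k (Up x y)"
  thus "i \<in> (if y = 0 then {0} else {}) \<union> (if x + y + 1 = k then {1} else {})
      \<union> (if x = 0 then {2} else {})"
    unfolding tri_sides_def side_tri_def by (auto split: if_splits)
next
  fix i :: nat assume i: "i \<in> (if y = 0 then {0} else {}) \<union> (if x + y + 1 = k then {1} else {})
      \<union> (if x = 0 then {2} else {})"
  have "\<exists>t<k. Up x y = side_tri k 0 t" if "y = 0"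
    using that xy by (intro exI[of _ x]) (simp add: side_tri_def)
  moreover have "\<exists>t<k. Up x y = side_tri k 1 t" if "x + y + 1 = k"
    using that by (intro exI[of _ y]) (auto simp: side_tri_def)
  moreover have "\<exists>t<k. Up x y = side_tri k 2 t" if "x = 0"
    using that xy by (intro exI[of _ "k - 1 - y"]) (simp add: side_tri_def)
  ultimately show "i \<in> tri_sides k (Up x y)"
    using i unfolding tri_sides_def by (auto split: if_splits)
qed

lemma card_tri_sides_up:
  assumes xy: "x + y < k"
  shows "card (tri_sides k (Up x y)) = of_bool (y = 0) + of_bool (x + y + 1 = k) + of_bool (x = 0)"
  unfolding tri_sides_up[OF xy]
  by (cases "y = 0"; cases "x + y + 1 = k"; cases "x = 0") (auto simp: card_insert_if)

lemma tri_sides_dn: "tri_sides k (Dn x y) = {}"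
  unfolding tri_sides_def side_tri_def by auto

lemma cluster_deg_plus_sides:
  assumes a: "a \<in> tri_verts k"
  shows "cluster_deg k a + card (tri_sides k a) = 3"
proof (cases a)
  case (Up x y)
  hence xy: "x + y < k" using a unfolding tri_verts_def by auto
  show ?thesis unfolding Up cluster_deg_up[OF xy] card_tri_sides_up[OF xy] using xy
    by (cases "x = 0"; cases "y = 0"; cases "x + y + 1 = k", auto)
next
  case (Dn x y)
  hence xy: "x + y + 1 < k" using a unfolding tri_verts_def by auto
  show ?thesis unfolding Dn cluster_deg_dn[OF xy] tri_sides_dn by simp
qed

lemma cluster_deg_le3: "a \<in> tri_verts k \<Longrightarrow> cluster_deg k a \<le> 3"
  using cluster_deg_plus_sides by fastforce


definition boundary_tri :: "nat \<Rightarrow> nat \<Rightarrow> tri" where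
  "boundary_tri k t = (if t < k - 1 then Up t 0 else if t < 2 * (k - 1) then Up (k - 1 - (t - (k - 1))) (t - (k - 1))
     else Up 0 (k - 1 - (t - 2 * (k - 1))))"

lemma boundary_tri_inj: "inj_on (boundary_tri k) {..<3 * (k - 1)}"
proof (rule inj_onI)
  fix t t' assume t: "t \<in> {..<3 * (k - 1)}" and t': "t' \<in> {..<3 * (k - 1)}" and e: "boundary_tri k t = boundary_tri k t'"
  show "t = t'"
    using t t' e unfolding boundary_tri_def by (auto split: if_splits)
qed

lemma side_tri_in_tri_verts: "i < 3 \<Longrightarrow> t < k \<Longrightarrow> side_tri k i t \<in> tri_verts k"
  unfolding side_tri_def tri_verts_def by auto

lemma side_tri_inj: "i < 3 \<Longrightarrow> t < k \<Longrightarrow> t' < k \<Longrightarrow> side_tri k i t = side_tri k i t' \<Longrightarrow> t = t'"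
  unfolding side_tri_def by (auto split: if_splits)

lemma boundary_tri_on_side:
  assumes t: "t < 3 * (k - 1)"
  shows "\<exists>i<3. \<exists>s<k. boundary_tri k t = side_tri k i s"
proof (cases "t < k - 1")
  case True
  thus ?thesis unfolding boundary_tri_def side_tri_def by (intro exI[of _ 0], auto)
next
  case F: False
  show ?thesis
  proof (cases "t < 2 * (k - 1)")
    case True
    thus ?thesis using F unfolding boundary_tri_def side_tri_def by (intro exI[of _ 1], auto)
  next
    case False
    hence "boundary_tri k t = side_tri k 2 (t - 2 * (k - 1))" "t - 2 * (k - 1) < k"
      using F t unfolding boundary_tri_def side_tri_def by auto
    thus ?thesis by (intro exI[of _ 2], auto)
  qed
qed

lemma side_tri_in_boundary:
  assumes k: "2 \<le> k" and i: "i < 3" and t: "t < k"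
  shows "side_tri k i t \<in> boundary_tri k ` {..<3 * (k - 1)}"
proof -
  have "i = 0 \<or> i = 1 \<or> i = 2" using i by arith
  moreover
  { assume i0: "i = 0"
    have ?thesis
    proof (cases "t < k - 1")
      case True thus ?thesis using i0 k unfolding side_tri_def by (intro image_eqI[of _ _ t], auto simp: boundary_tri_def)
    next
      case False hence "t = k - 1" using t by auto
      thus ?thesis using i0 k unfolding side_tri_def by (intro image_eqI[of _ _ "k - 1"], auto simp: boundary_tri_def)
    qed }
  moreover
  { assume i1: "i = 1"
    have ?thesis
    proof (cases "t < k - 1")
      case True thus ?thesis using i1 k unfolding side_tri_def by (intro image_eqI[of _ _ "k - 1 + t"], auto simp: boundary_tri_def)
    next
      case False hence "t = k - 1" using t by auto
      thus ?thesis using i1 k unfolding side_tri_def by (intro image_eqI[of _ _ "2 * (k - 1)"], auto simp: boundary_tri_def)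
    qed }
  moreover
  { assume i2: "i = 2"
    have ?thesis
    proof (cases "t < k - 1")
      case True thus ?thesis using i2 k unfolding side_tri_def by (intro image_eqI[of _ _ "2 * (k - 1) + t"], auto simp: boundary_tri_def)
    next
      case False hence "t = k - 1" using t by auto
      thus ?thesis using i2 k unfolding side_tri_def by (intro image_eqI[of _ _ 0], auto simp: boundary_tri_def)
    qed }
  ultimately show ?thesis by blast
qed

lemma cluster_deg_side_tri:
  assumes i: "i < 3" and t: "t < k"
  shows "cluster_deg k (side_tri k i t) \<le> 2"
proof -
  have "i \<in> tri_sides k (side_tri k i t)" unfolding tri_sides_def using i t by auto
  moreover have "finite (tri_sides k (side_tri k i t))" unfolding tri_sides_def by auto
  ultimately have "card (tri_sides k (side_tri k i t)) \<ge> 1"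
    by (metis One_nat_def Suc_leI card_gt_0_iff empty_iff)
  thus ?thesis using cluster_deg_plus_sides[OF side_tri_in_tri_verts[OF i t]] by simp
qed

lemma low_degree_tris_eq_boundary:
  assumes k: "2 \<le> k"
  shows "{a \<in> tri_verts k. cluster_deg k a < 3} = boundary_tri k ` {..<3 * (k - 1)}"
proof
  show "{a \<in> tri_verts k. cluster_deg k a < 3} \<subseteq> boundary_tri k ` {..<3 * (k - 1)}"
  proof
    fix a assume a: "a \<in> {a \<in> tri_verts k. cluster_deg k a < 3}"
    hence "tri_sides k a \<noteq> {}" using cluster_deg_plus_sides[of a k] by force
    then obtain i t where "i < 3" "t < k" "a = side_tri k i t" unfolding tri_sides_def by auto
    thus "a \<in> boundary_tri k ` {..<3 * (k - 1)}" using side_tri_in_boundary[OF k] by simp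
  qed
  show "boundary_tri k ` {..<3 * (k - 1)} \<subseteq> {a \<in> tri_verts k. cluster_deg k a < 3}"
  proof
    fix a assume "a \<in> boundary_tri k ` {..<3 * (k - 1)}"
    then obtain i s where "i < 3" "s < k" "a = side_tri k i s"
      using boundary_tri_on_side by blast
    thus "a \<in> {a \<in> tri_verts k. cluster_deg k a < 3}"
      using side_tri_in_tri_verts cluster_deg_side_tri by fastforce
  qed
qed

lemma card_filter_split: "finite S \<Longrightarrow> card S = card {a \<in> S. P a} + card {a \<in> S. \<not> P a}"
  by (subst card_Un_disjoint[symmetric], auto intro: arg_cong[of _ _ card])

lemma card_low_degree_tris:
  assumes k: "2 \<le> k"
  shows "card {a \<in> tri_verts k. cluster_deg k a < 3} = 3 * (k - 1)"
  unfolding low_degree_tris_eq_boundary[OF k] card_image[OF boundary_tri_inj] by simp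

lemma card_full_degree_tris:
  assumes k: "2 \<le> k"
  shows "card {a \<in> tri_verts k. 3 \<le> cluster_deg k a} = k^2 - 3 * (k - 1)"
proof -
  have "{a \<in> tri_verts k. \<not> 3 \<le> cluster_deg k a} = {a \<in> tri_verts k. cluster_deg k a < 3}" by auto
  thus ?thesis using card_filter_split[OF finite_tri_verts, of k "\<lambda>a. 3 \<le> cluster_deg k a"]
      card_tri_verts card_low_degree_tris[OF k] by simp
qed

lemma degree_le1_tris_eq_corners:
  assumes k: "2 \<le> k"
  shows "{a \<in> tri_verts k. cluster_deg k a \<le> 1} = {Up 0 0, Up (k - 1) 0, Up 0 (k - 1)}"
proof
  show "{a \<in> tri_verts k. cluster_deg k a \<le> 1} \<subseteq> {Up 0 0, Up (k - 1) 0, Up 0 (k - 1)}"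
  proof
    fix a assume a: "a \<in> {a \<in> tri_verts k. cluster_deg k a \<le> 1}"
    show "a \<in> {Up 0 0, Up (k - 1) 0, Up 0 (k - 1)}"
    proof (cases a)
      case (Up x y)
      hence xy: "x + y < k" using a unfolding tri_verts_def by auto
      have "of_bool (x + y + 1 < k) + of_bool (1 \<le> x) + of_bool (1 \<le> y) \<le> (1::nat)"
        using a cluster_deg_up[OF xy] Up by auto
      thus ?thesis using Up xy k by (cases "x = 0"; cases "y = 0", auto)
    next
      case (Dn x y)
      hence "x + y + 1 < k" using a unfolding tri_verts_def by auto
      thus ?thesis using a cluster_deg_dn Dn by auto
    qed
  qed
  have "Up 0 0 \<in> tri_verts k" "Up (k - 1) 0 \<in> tri_verts k" "Up 0 (k - 1) \<in> tri_verts k"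
    using k unfolding tri_verts_def by auto
  moreover have "cluster_deg k (Up 0 0) \<le> 1" using cluster_deg_up[of 0 0 k] k by simp
  moreover have "cluster_deg k (Up (k - 1) 0) \<le> 1" using cluster_deg_up[of "k - 1" 0 k] k by simp
  moreover have "cluster_deg k (Up 0 (k - 1)) \<le> 1" using cluster_deg_up[of 0 "k - 1" k] k by simp
  ultimately show "{Up 0 0, Up (k - 1) 0, Up 0 (k - 1)} \<subseteq> {a \<in> tri_verts k. cluster_deg k a \<le> 1}"
    by auto
qed

lemma card_degree_ge2_tris:
  assumes k: "2 \<le> k"
  shows "card {a \<in> tri_verts k. 2 \<le> cluster_deg k a} = k^2 - 3"
proof -
  have "{a \<in> tri_verts k. \<not> 2 \<le> cluster_deg k a} = {a \<in> tri_verts k. cluster_deg k a \<le> 1}"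
    by auto
  also have "\<dots> = {Up 0 0, Up (k - 1) 0, Up 0 (k - 1)}" by (rule degree_le1_tris_eq_corners[OF k])
  finally have "card {a \<in> tri_verts k. \<not> 2 \<le> cluster_deg k a} = 3" using k by simp
  thus ?thesis using card_filter_split[OF finite_tri_verts, of k "\<lambda>a. 2 \<le> cluster_deg k a"]
      card_tri_verts by simp
qed

lemma cluster_deg_ge1:
  assumes k: "2 \<le> k" and a: "a \<in> tri_verts k"
  shows "1 \<le> cluster_deg k a"
proof (cases a)
  case (Up x y)
  hence xy: "x + y < k" using a unfolding tri_verts_def by auto
  thus ?thesis using cluster_deg_up[OF xy] Up k by (cases "x = 0"; cases "y = 0", auto)
next
  case (Dn x y)
  hence "x + y + 1 < k" using a unfolding tri_verts_def by auto
  thus ?thesis using cluster_deg_dn Dn by auto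
qed

abbreviation cluster_adjacency :: "nat \<Rightarrow> real mat" where
  "cluster_adjacency k \<equiv> adjacency_mat (tri_verts k) (cluster_adj k)"

abbreviation cluster_laplacian :: "nat \<Rightarrow> real mat" where
  "cluster_laplacian k \<equiv> laplacian_mat (tri_verts k) (cluster_adj k)"

lemma cluster_adj_sym: "cluster_adj k a b \<Longrightarrow> cluster_adj k b a"
  unfolding cluster_adj_def by (cases a; cases b, auto)

lemma length_vlist_tri_verts: "length (vlist (tri_verts k)) = k^2"
  using vlist_props(3)[OF finite_tri_verts] card_tri_verts by simp

lemma sym_cluster_adjacency: "sym_mat (cluster_adjacency k) (k^2)"
  using sym_adjacency_mat[of "cluster_adj k" "tri_verts k"] cluster_adj_sym
  unfolding length_vlist_tri_verts by blast

lemma sym_cluster_laplacian: "sym_mat (cluster_laplacian k) (k^2)"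
  using sym_laplacian_mat[of "cluster_adj k" "tri_verts k"] cluster_adj_sym
  unfolding length_vlist_tri_verts by blast

lemma cluster_indices_of_degree:
  "card {l. l < k^2 \<and> P (cluster_deg k (vlist (tri_verts k) ! l))}
    = card {a \<in> tri_verts k. P (cluster_deg k a)}"
  using card_vlist_indices[where S = "tri_verts k" and P = "\<lambda>a. P (cluster_deg k a)",
      OF finite_tri_verts]
  unfolding length_vlist_tri_verts .

text \<open>The thresholds of delta come from the degree counts: for k \<ge> 2 the cluster has
  k^2 - 3k + 3 triangles of degree 3, k^2 - 3 of degree at least 2, and none of degree 0.\<close>

lemma cluster_indices_deg_ge:
  assumes k: "2 \<le> k" and b: "1 \<le> b" "b \<le> k^2"
  obtains J where "J \<subseteq> {..<k^2}" and "b \<le> card J"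
    and "\<forall>l\<in>J. 3 - delta k b \<le> real (cluster_deg k (vlist (tri_verts k) ! l))"
proof -
  let ?J = "\<lambda>c. {l. l < k^2 \<and> c \<le> cluster_deg k (vlist (tri_verts k) ! l)}"
  have kk: "3 * (k - 1) \<le> k^2"
  proof (cases "3 \<le> k")
    case True
    hence "3 * k \<le> k * k" by (simp add: mult_right_mono)
    thus ?thesis unfolding power2_eq_square by linarith
  next
    case False
    thus ?thesis using k by (cases "k = 2") auto
  qed
  have "\<exists>c. b \<le> card (?J c) \<and> real c = 3 - delta k b"
  proof (cases "int b \<le> int (k^2) - 3 * int k + 3")
    case True
    hence "b \<le> card (?J 3)"
      using cluster_indices_of_degree[of k "(\<le>) 3"] card_full_degree_tris[OF k] kk k by linarith
    moreover have "delta k b = 0" using True unfolding delta_def by simp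
    ultimately show ?thesis by (intro exI[of _ 3]) simp
  next
    case F: False
    show ?thesis
    proof (cases "int b \<le> int (k^2) - 3")
      case True
      hence "b \<le> card (?J 2)"
        using cluster_indices_of_degree[of k "(\<le>) 2"] card_degree_ge2_tris[OF k] by linarith
      moreover have "delta k b = 1" using F True unfolding delta_def by simp
      ultimately show ?thesis by (intro exI[of _ 2]) simp
    next
      case False
      have "?J 1 = {..<k^2}"
        using cluster_deg_ge1[OF k] vlist_props(2)[OF finite_tri_verts] length_vlist_tri_verts
        by (force simp: nth_mem)
      hence "b \<le> card (?J 1)" "delta k b = 2" using b F False unfolding delta_def by simp_all
      thus ?thesis by (intro exI[of _ 1]) simp
    qed
  qed
  then obtain c where "b \<le> card (?J c)" "real c = 3 - delta k b" by blast
  thus ?thesis using that[of "?J c"] by auto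
qed

lemma cluster_indices_deg_le:
  assumes k: "1 \<le> k" and b: "1 \<le> b" "b \<le> k^2"
  obtains J where "J \<subseteq> {..<k^2}" and "k^2 - b + 1 \<le> card J"
    and "\<forall>l\<in>J. real (cluster_deg k (vlist (tri_verts k) ! l)) \<le> 3 - delta k b"
proof -
  let ?J = "\<lambda>c. {l. l < k^2 \<and> cluster_deg k (vlist (tri_verts k) ! l) \<le> c}"
  have "\<exists>c. k^2 - b + 1 \<le> card (?J c) \<and> real c = 3 - delta k b"
  proof (cases "int b \<le> int (k^2) - 3 * int k + 3")
    case True
    have "?J 3 = {..<k^2}"
      using cluster_deg_le3 vlist_props(2)[OF finite_tri_verts] length_vlist_tri_verts
      by (force simp: nth_mem)
    hence "k^2 - b + 1 \<le> card (?J 3)" "delta k b = 0" using b True unfolding delta_def by simp_all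
    thus ?thesis by (intro exI[of _ 3]) simp
  next
    case F: False
    hence k2: "2 \<le> k" using k b by (cases "k = 1") auto
    show ?thesis
    proof (cases "int b \<le> int (k^2) - 3")
      case True
      have "{a \<in> tri_verts k. cluster_deg k a \<le> 2} = {a \<in> tri_verts k. cluster_deg k a < 3}" by auto
      moreover have "k^2 - b + 1 \<le> 3 * (k - 1)" using F k2 b by linarith
      ultimately have "k^2 - b + 1 \<le> card (?J 2)"
        using cluster_indices_of_degree[of k "\<lambda>d. d \<le> 2"] card_low_degree_tris[OF k2] by simp
      moreover have "delta k b = 1" using F True unfolding delta_def by simp
      ultimately show ?thesis by (intro exI[of _ 2]) simp
    next
      case False
      hence "k^2 - b + 1 \<le> 3" using b by linarith
      hence "k^2 - b + 1 \<le> card (?J 1)"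
        using cluster_indices_of_degree[of k "\<lambda>d. d \<le> 1"] degree_le1_tris_eq_corners[OF k2] k2 b
        by simp
      moreover have "delta k b = 2" using F False unfolding delta_def by simp
      ultimately show ?thesis by (intro exI[of _ 1]) simp
    qed
  qed
  then obtain c where "k^2 - b + 1 \<le> card (?J c)" "real c = 3 - delta k b" by blast
  thus ?thesis using that[of "?J c"] by auto
qed

lemma cluster_adjacency_quadratic_form:
  assumes "y \<in> carrier_vec (k^2)"
  shows "y \<bullet> (cluster_adjacency k *\<^sub>v y)
    = (\<Sum>l<k^2. real (cluster_deg k (vlist (tri_verts k) ! l)) * (y $ l)^2)
      - y \<bullet> (cluster_laplacian k *\<^sub>v y)"
  using adjacency_quadratic_form[of y "tri_verts k" "cluster_adj k"] assms
  unfolding length_vlist_tri_verts by simp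

lemma cluster_eig_adjacency_ge:
  assumes k: "2 \<le> k" and it: "1 \<le> i" "i \<le> t" "t \<le> k^2"
  shows "3 - eig (cluster_laplacian k) t - delta k (k^2 - t + i)
    \<le> eig (cluster_adjacency k) (k^2 - i + 1)"
proof -
  obtain J where "J \<subseteq> {..<k^2}" and "k^2 - t + i \<le> card J"
    and "\<forall>l\<in>J. 3 - delta k (k^2 - t + i) \<le> real (cluster_deg k (vlist (tri_verts k) ! l))"
  proof (rule cluster_indices_deg_ge[OF k])
    show "1 \<le> k^2 - t + i" "k^2 - t + i \<le> k^2" using it by auto
  qed
  from eig_ge_diag_minus[OF sym_cluster_adjacency sym_cluster_laplacian
      cluster_adjacency_quadratic_form it this]
  show ?thesis by simp
qed

lemma cluster_eig_adjacency_le: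
  assumes k: "1 \<le> k" and js: "1 \<le> j" "j \<le> s" "s \<le> k^2"
  shows "eig (cluster_adjacency k) j
    \<le> 3 - eig (cluster_laplacian k) (k^2 - s + 1) - delta k (1 + s - j)"
proof -
  obtain J where J: "J \<subseteq> {..<k^2}" and cJ: "k^2 - (1 + s - j) + 1 \<le> card J"
    and Jd: "\<forall>l\<in>J. real (cluster_deg k (vlist (tri_verts k) ! l)) \<le> 3 - delta k (1 + s - j)"
  proof (rule cluster_indices_deg_le[OF k])
    show "1 \<le> 1 + s - j" "1 + s - j \<le> k^2" using js by auto
  qed
  have "k^2 - s + j \<le> card J" using cJ js by simp
  from eig_le_diag_minus[OF sym_cluster_adjacency sym_cluster_laplacian
      cluster_adjacency_quadratic_form js J this Jd]
  show ?thesis by simp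
qed

section \<open>The Goldberg-Coxeter graph\<close>

definition side_pos :: "nat \<Rightarrow> nat \<Rightarrow> tri \<Rightarrow> nat" where
  "side_pos k i a = (THE t. t < k \<and> a = side_tri k i t)"

lemma side_pos:
  assumes "i \<in> tri_sides k a"
  shows "side_pos k i a < k" and "a = side_tri k i (side_pos k i a)"
proof -
  have "\<exists>!t. t < k \<and> a = side_tri k i t"
    using assms side_tri_inj[of i _ k] unfolding tri_sides_def by auto
  hence "side_pos k i a < k \<and> a = side_tri k i (side_pos k i a)"
    unfolding side_pos_def by (rule theI')
  thus "side_pos k i a < k" "a = side_tri k i (side_pos k i a)" by auto
qed

locale gc_graph =
  fixes V :: "'v set" and E :: "'v \<Rightarrow> 'v \<Rightarrow> bool" and nb :: "'v \<Rightarrow> nat \<Rightarrow> 'v" and k :: nat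
  assumes simple: "simple_graph V E" and oriented: "orientation V E nb"
    and nonempty: "V \<noteq> {}" and k_pos: "1 \<le> k"
begin

lemma adj_sym: "E p q \<Longrightarrow> E q p" and adj_irrefl: "\<not> E p p" and finite_V: "finite V"
  using simple unfolding simple_graph_def by auto

lemma nb_bij:
  assumes "p \<in> V"
  shows "bij_betw (nb p) {i. i < 3} {q \<in> V. E p q}"
proof -
  have three: "{0, 1, 2} = {i::nat. i < 3}" by auto
  show ?thesis using oriented assms unfolding orientation_def three by blast
qed

lemma nb_neighbour: "p \<in> V \<Longrightarrow> i < 3 \<Longrightarrow> nb p i \<in> V \<and> E p (nb p i)"
  using nb_bij[of p] unfolding bij_betw_def by auto

definition back_index :: "'v \<Rightarrow> nat \<Rightarrow> nat" where
  "back_index p i = (THE j. j < 3 \<and> nb (nb p i) j = p)"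

lemma back_index:
  assumes p: "p \<in> V" and i: "i < 3"
  shows "back_index p i < 3" and "nb (nb p i) (back_index p i) = p"
    and "\<And>j. j < 3 \<Longrightarrow> nb (nb p i) j = p \<Longrightarrow> j = back_index p i"
proof -
  let ?q = "nb p i"
  have q: "?q \<in> V" "E ?q p" using nb_neighbour[OF p i] adj_sym by auto
  have "p \<in> nb ?q ` {j. j < 3}" using nb_bij[OF q(1)] q p unfolding bij_betw_def by auto
  then obtain j where j: "j < 3" "nb ?q j = p" by auto
  have "j' = j" if "j' < 3" "nb ?q j' = p" for j'
    using nb_bij[OF q(1)] that j unfolding bij_betw_def inj_on_def by auto
  hence ex1: "\<exists>!j. j < 3 \<and> nb ?q j = p" using j by blast
  have "back_index p i < 3 \<and> nb ?q (back_index p i) = p"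
    unfolding back_index_def by (rule theI'[OF ex1])
  thus "back_index p i < 3" "nb ?q (back_index p i) = p" by auto
  show "j = back_index p i" if "j < 3" "nb ?q j = p" for j
    unfolding back_index_def by (rule the1_equality[OF ex1, symmetric]) (use that in simp)
qed

lemma finite_gc_verts: "finite (gc_verts V k)"
  unfolding gc_verts_def using finite_V finite_tri_verts by auto

lemma gc_adj_sym: "gc_adj V E nb k u w \<Longrightarrow> gc_adj V E nb k w u"
proof -
  assume a: "gc_adj V E nb k u w"
  show "gc_adj V E nb k w u"
  proof (cases "fst u = fst w \<and> cluster_adj k (snd u) (snd w)")
    case True
    hence "cluster_adj k (snd w) (snd u)" by (blast intro: cluster_adj_sym)
    thus ?thesis using a True unfolding gc_adj_def by auto
  next
    case False
    then obtain i j t where ijt: "i < 3" "j < 3" "t < k" "E (fst u) (fst w)" "nb (fst u) i = fst w"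
      "nb (fst w) j = fst u" "snd u = side_tri k i t" "snd w = side_tri k j (k - 1 - t)"
      using a unfolding gc_adj_def by blast
    hence "j < 3 \<and> i < 3 \<and> k - 1 - t < k \<and> E (fst w) (fst u) \<and> nb (fst w) j = fst u
        \<and> nb (fst u) i = fst w \<and> snd w = side_tri k j (k - 1 - t)
        \<and> snd u = side_tri k i (k - 1 - (k - 1 - t))"
      using adj_sym by auto
    thus ?thesis using a unfolding gc_adj_def by blast
  qed
qed

lemma gc_adj_same_copy:
  "p \<in> V \<Longrightarrow> a \<in> tri_verts k \<Longrightarrow> b \<in> tri_verts k \<Longrightarrow>
    gc_adj V E nb k (p, a) (p, b) \<longleftrightarrow> cluster_adj k a b"
  unfolding gc_adj_def gc_verts_def using adj_irrefl by auto

lemma gc_adj_acrossI: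
  assumes "(p, a) \<in> gc_verts V k" and "(q, b) \<in> gc_verts V k" and "i < 3" and "j < 3"
    and "t < k" and "E p q" and "nb p i = q" and "nb q j = p"
    and "a = side_tri k i t" and "b = side_tri k j (k - 1 - t)"
  shows "gc_adj V E nb k (p, a) (q, b)"
  unfolding gc_adj_def fst_conv snd_conv using assms by blast

text \<open>The triangle of the copy at nb p i that is glued to a across side i of the copy at p.\<close>

definition opposite :: "'v \<Rightarrow> nat \<Rightarrow> tri \<Rightarrow> 'v \<times> tri" where
  "opposite p i a = (nb p i, side_tri k (back_index p i) (k - 1 - side_pos k i a))"

lemma gc_adj_opposite:
  assumes p: "p \<in> V" and a: "a \<in> tri_verts k" and i: "i \<in> tri_sides k a"
  shows "opposite p i a \<in> gc_verts V k" and "gc_adj V E nb k (p, a) (opposite p i a)"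
proof -
  have i3: "i < 3" using i unfolding tri_sides_def by auto
  note N = nb_neighbour[OF p i3] and T = side_pos[OF i] and J = back_index[OF p i3]
  show inT: "opposite p i a \<in> gc_verts V k"
    unfolding opposite_def gc_verts_def using N J(1) T side_tri_in_tri_verts by simp
  have pa: "(p, a) \<in> gc_verts V k" using p a unfolding gc_verts_def by simp
  show "gc_adj V E nb k (p, a) (opposite p i a)"
    using inT unfolding opposite_def
    by (rule gc_adj_acrossI[OF pa _ i3 J(1) T(1) conjunct2[OF N] refl J(2) T(2) refl])
qed

lemma gc_adj_other_copy:
  assumes p: "p \<in> V" and adj: "gc_adj V E nb k (p, a) (q, b)" and qp: "q \<noteq> p"
  obtains i where "i \<in> tri_sides k a" and "(q, b) = opposite p i a"
proof -
  from adj qp obtain i j t where ijt: "i < 3" "j < 3" "t < k" "nb p i = q" "nb q j = p"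
    "a = side_tri k i t" "b = side_tri k j (k - 1 - t)"
    unfolding gc_adj_def fst_conv snd_conv by blast
  have i: "i \<in> tri_sides k a" unfolding tri_sides_def using ijt(1,3,6) by blast
  have "t = side_pos k i a"
    using side_tri_inj[OF ijt(1) ijt(3) side_pos(1)[OF i]] side_pos(2)[OF i] ijt(6) by simp
  moreover have "j = back_index p i" using back_index(3)[OF p ijt(1)] ijt(2,4,5) by simp
  ultimately show ?thesis using that[OF i] ijt(4,7) unfolding opposite_def by simp
qed

abbreviation gc_laplacian :: "real mat" where
  "gc_laplacian \<equiv> laplacian_mat (gc_verts V k) (gc_adj V E nb k)"

lemma gc_deg:
  assumes p: "p \<in> V" and a: "a \<in> tri_verts k"
  shows "graph_degree (gc_verts V k) (gc_adj V E nb k) (p, a) = 3"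
proof -
  let ?N = "{w \<in> gc_verts V k. gc_adj V E nb k (p, a) w}"
  have inner: "{w \<in> ?N. fst w = p} = Pair p ` {b \<in> tri_verts k. cluster_adj k a b}"
  proof (intro equalityI subsetI)
    fix w assume w: "w \<in> {w \<in> ?N. fst w = p}"
    then obtain b where wb: "w = (p, b)" and b: "b \<in> tri_verts k"
      unfolding gc_verts_def by (cases w) auto
    hence "cluster_adj k a b" using w gc_adj_same_copy[OF p a b] by simp
    thus "w \<in> Pair p ` {b \<in> tri_verts k. cluster_adj k a b}" using wb b by blast
  next
    fix w assume "w \<in> Pair p ` {b \<in> tri_verts k. cluster_adj k a b}"
    then obtain b where wb: "w = (p, b)" and b: "b \<in> tri_verts k" "cluster_adj k a b" by blast
    thus "w \<in> {w \<in> ?N. fst w = p}"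
      using gc_adj_same_copy[OF p a b(1)] p unfolding gc_verts_def by simp
  qed
  have outer: "{w \<in> ?N. fst w \<noteq> p} = (\<lambda>i. opposite p i a) ` tri_sides k a"
  proof (intro equalityI subsetI)
    fix w assume w: "w \<in> {w \<in> ?N. fst w \<noteq> p}"
    obtain q b where wq: "w = (q, b)" by (cases w)
    have "gc_adj V E nb k (p, a) (q, b)" "q \<noteq> p" using w unfolding wq by auto
    then obtain i where "i \<in> tri_sides k a" "(q, b) = opposite p i a"
      using gc_adj_other_copy[OF p] by blast
    thus "w \<in> (\<lambda>i. opposite p i a) ` tri_sides k a" unfolding wq by blast
  next
    fix w assume "w \<in> (\<lambda>i. opposite p i a) ` tri_sides k a"
    then obtain i where i: "i \<in> tri_sides k a" and w: "w = opposite p i a" by blast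
    have "i < 3" using i unfolding tri_sides_def by simp
    hence "fst w \<noteq> p" using nb_neighbour[OF p] adj_irrefl unfolding w opposite_def by force
    thus "w \<in> {w \<in> ?N. fst w \<noteq> p}" using gc_adj_opposite[OF p a i] w by simp
  qed
  have "inj_on (\<lambda>i. opposite p i a) (tri_sides k a)"
    using nb_bij[OF p] unfolding opposite_def tri_sides_def bij_betw_def inj_on_def by auto
  hence "card {w \<in> ?N. fst w \<noteq> p} = card (tri_sides k a)" unfolding outer by (rule card_image)
  moreover have "card {w \<in> ?N. fst w = p} = cluster_deg k a"
    unfolding inner graph_degree_def by (rule card_image) (auto intro: inj_onI)
  moreover have "card ?N = card {w \<in> ?N. fst w = p} + card {w \<in> ?N. fst w \<noteq> p}"
    using card_filter_split[of ?N "\<lambda>w. fst w = p"] finite_gc_verts by auto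
  ultimately show ?thesis
    using cluster_deg_plus_sides[OF a] unfolding graph_degree_def by simp
qed

lemma card_gc_verts: "card (gc_verts V k) = card V * k^2"
  unfolding gc_verts_def by (simp add: card_cartesian_product card_tri_verts)

lemma sym_gc_laplacian: "sym_mat gc_laplacian (card (gc_verts V k))"
  using sym_laplacian_mat[of "gc_adj V E nb k" "gc_verts V k"] gc_adj_sym
    vlist_props(3)[OF finite_gc_verts] by metis

lemma gc_cluster_compression:
  assumes p: "p \<in> V"
  obtains Emb where "isometry_mat Emb (card (gc_verts V k)) (k^2)"
    and "\<And>y. y \<in> carrier_vec (k^2) \<Longrightarrow>
      (Emb *\<^sub>v y) \<bullet> (gc_laplacian *\<^sub>v (Emb *\<^sub>v y)) = 3 * (y \<bullet> y) - y \<bullet> (cluster_adjacency k *\<^sub>v y)"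
proof -
  have sub: "Pair p ` tri_verts k \<subseteq> gc_verts V k" using p unfolding gc_verts_def by auto
  have inj: "inj_on (Pair p) (tri_verts k)" by (simp add: inj_on_def)
  obtain Emb where iso: "isometry_mat Emb (card (gc_verts V k)) (card (tri_verts k))"
    and quad: "\<And>y. y \<in> carrier_vec (card (tri_verts k)) \<Longrightarrow>
      (Emb *\<^sub>v y) \<bullet> (gc_laplacian *\<^sub>v (Emb *\<^sub>v y))
        = real 3 * (y \<bullet> y) - y \<bullet> (cluster_adjacency k *\<^sub>v y)"
    using laplacian_compression_regular_induced[OF finite_gc_verts finite_tri_verts sub inj
      gc_deg[OF p] gc_adj_same_copy[OF p]] by blast
  show ?thesis by (rule that[OF iso[unfolded card_tri_verts]]) (simp add: quad card_tri_verts)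
qed

lemma gc_verts_nonempty: "gc_verts V k \<noteq> {}"
proof -
  have "0 < card (gc_verts V k)"
    unfolding card_gc_verts using nonempty finite_V k_pos by (simp add: card_gt_0_iff)
  thus ?thesis by auto
qed


theorem gc_eig_adjacency_interlacing:
  assumes j: "1 \<le> j" "j \<le> k^2"
  shows "eig gc_laplacian j \<le> 3 - eig (cluster_adjacency k) (k^2 - j + 1)"
    and "3 - eig (cluster_adjacency k) j \<le> eig gc_laplacian (card (gc_verts V k) - j + 1)"
proof -
  obtain p where p: "p \<in> V" using nonempty by blast
  have "1 \<le> card V" using p finite_V by (simp add: Suc_le_eq card_gt_0_iff) blast
  hence mN: "k^2 \<le> card (gc_verts V k)" unfolding card_gc_verts by simp
  obtain Emb where iso: "isometry_mat Emb (card (gc_verts V k)) (k^2)"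
    and quad: "\<And>y. y \<in> carrier_vec (k^2) \<Longrightarrow>
      (Emb *\<^sub>v y) \<bullet> (gc_laplacian *\<^sub>v (Emb *\<^sub>v y)) = 3 * (y \<bullet> y) - y \<bullet> (cluster_adjacency k *\<^sub>v y)"
    using gc_cluster_compression[OF p] by blast
  show "eig gc_laplacian j \<le> 3 - eig (cluster_adjacency k) (k^2 - j + 1)"
    and "3 - eig (cluster_adjacency k) j \<le> eig gc_laplacian (card (gc_verts V k) - j + 1)"
    using interlacing_reflected[OF sym_gc_laplacian sym_cluster_adjacency iso quad mN j] by auto
qed

theorem gc_eig_laplacian_upper:
  assumes it: "1 \<le> i" "i \<le> t" "t \<le> k^2"
  shows "eig gc_laplacian i \<le> eig (cluster_laplacian k) t + delta k (k^2 - t + i)"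
proof (cases "k = 1")
  case True
  hence "i = 1" "t = 1" using it by auto
  moreover have "eig gc_laplacian 1 \<le> 0"
    using laplacian_eig_bounds(1)[where S = "gc_verts V k" and E = "gc_adj V E nb k"]
      finite_gc_verts gc_adj_sym gc_verts_nonempty by blast
  moreover have "0 \<le> eig (cluster_laplacian 1) 1"
    using laplacian_eig_bounds(2)[where S = "tri_verts 1" and E = "cluster_adj 1"]
      finite_tri_verts cluster_adj_sym card_tri_verts[of 1] by fastforce
  ultimately show ?thesis using True by (simp add: delta_def)
next
  case False
  hence "2 \<le> k" using k_pos by simp
  thus ?thesis using cluster_eig_adjacency_ge[of k i t] gc_eig_adjacency_interlacing(1)[of i] it
    by simp
qed

theorem gc_eig_laplacian_lower:
  assumes js: "1 \<le> j" "j \<le> s" "s \<le> k^2"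
  shows "eig (cluster_laplacian k) (k^2 - s + 1) + delta k (1 + s - j)
    \<le> eig gc_laplacian (card (gc_verts V k) - j + 1)"
  using cluster_eig_adjacency_le[OF k_pos js] gc_eig_adjacency_interlacing(2)[of j] js by simp

end

theorem theorem3p2:
  fixes V :: "'v set" and E :: "'v \<Rightarrow> 'v \<Rightarrow> bool" and nb :: "'v \<Rightarrow> nat \<Rightarrow> 'v" and k :: nat
  assumes "simple_graph V E" and "connected_graph V E" and "three_valent V E"
    and "orientation V E nb" and "k \<ge> 1"
  shows "let G = laplacian_mat (gc_verts V k) (gc_adj V E nb k);
             N = card (gc_verts V k);
             Adj = adjacency_mat (tri_verts k) (cluster_adj k);
             L = laplacian_mat (tri_verts k) (cluster_adj k)
         in (\<forall>j. 1 \<le> j \<and> j \<le> k^2 \<longrightarrow>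
               eig G j \<le> 3 - eig Adj (k^2 - j + 1) \<and>
               eig G (N - j + 1) \<ge> 3 - eig Adj j)
          \<and> (\<forall>i t. 1 \<le> i \<and> i \<le> t \<and> t \<le> k^2 \<longrightarrow>
               eig G i \<le> eig L t + delta k (k^2 - t + i))
          \<and> (\<forall>j s. 1 \<le> j \<and> j \<le> s \<and> s \<le> k^2 \<longrightarrow>
               eig G (N - j + 1) \<ge> eig L (k^2 - s + 1) + delta k (1 + s - j))"
proof -
  \<comment> \<open>three_valent follows from the orientation; connectivity is only needed for V \<noteq> {}.\<close>
  interpret gc_graph V E nb k
    using assms unfolding connected_graph_def by unfold_locales auto
  show ?thesis unfolding Let_def
  proof (intro conjI allI impI)
    fix j assume "1 \<le> j \<and> j \<le> k^2"
    thus "eig gc_laplacian j \<le> 3 - eig (cluster_adjacency k) (k^2 - j + 1)"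
      and "3 - eig (cluster_adjacency k) j \<le> eig gc_laplacian (card (gc_verts V k) - j + 1)"
      using gc_eig_adjacency_interlacing by auto
  next
    fix i t assume "1 \<le> i \<and> i \<le> t \<and> t \<le> k^2"
    thus "eig gc_laplacian i \<le> eig (cluster_laplacian k) t + delta k (k^2 - t + i)"
      using gc_eig_laplacian_upper by auto
  next
    fix j s assume "1 \<le> j \<and> j \<le> s \<and> s \<le> k^2"
    thus "eig (cluster_laplacian k) (k^2 - s + 1) + delta k (1 + s - j)
        \<le> eig gc_laplacian (card (gc_verts V k) - j + 1)"
      using gc_eig_laplacian_lower by auto
  qed
qed

end
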